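(* Let $1\le p<\infty$ and let $v=(v_n)_{n\in\mathbb{Z}}$ be a sequence of positive numbers with $\sup_{n\in\mathbb{Z}}v_{n+1}/v_n<\infty$, so that the forward shift $F(x_n)_{n\in\mathbb{Z}}=(x_{n-1})_{n\in\mathbb{Z}}$ is a bounded operator on $\ell^p(\mathbb{Z},v)$. Then $F$ is distributionally chaotic if and only if it is densely distributionally chaotic. Moreover, if there exist finite nonempty subsets $S_k\subset\mathbb{Z}$ ($k\in\mathbb{N}$) such that (i) there exists $A\subseteq\mathbb{N}$ with $\overline{\mathrm{dens}}(A)=1$ such that $\lim_{n\in A}v_n=0$, and (ii) there exist $\varepsilon>0$ and an increasing sequence $(N_k)$ in $\mathbb{N}$ such that for every $k\in\mathbb{N}$ \[\operatorname{card}\Big\{1\le n\le N_k:\ \frac{\sum_{j\in S_k}v_{n+j}}{\sum_{j\in S_k}v_j}\ge k\Big\}\ge N_k\varepsilon,\] then $F$ is (densely) distributionally chaotic.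
   Context: $\ell^p(\mathbb{Z},v)=\{(x_n)_{n\in\mathbb{Z}}:\sum_{n}|x_n|^pv_n<\infty\}$ with norm $(\sum_n|x_n|^pv_n)^{1/p}$. For $A\subseteq\mathbb{N}$, $\overline{\mathrm{dens}}(A)=\limsup_{N}\frac{\operatorname{card}(A\cap[1,N])}{N}$, $\underline{\mathrm{dens}}(A)=\liminf_{N}\frac{\operatorname{card}(A\cap[1,N])}{N}$. An operator $T$ on a Banach space $Y$ is distributionally chaotic if there exist an uncountable $\Gamma\subset Y$ and $\varepsilon>0$ such that for every $\delta>0$ and distinct $x,y\in\Gamma$: $\underline{\mathrm{dens}}\{j:\|T^jx-T^jy\|<\varepsilon\}=0$ and $\overline{\mathrm{dens}}\{j:\|T^jx-T^jy\|<\delta\}=1$; densely distributionally chaotic if $\Gamma$ can be chosen dense. *)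

theory Defs
  imports "HOL-Analysis.Analysis" "HOL-Library.Liminf_Limsup"
begin

definition lpw :: "real \<Rightarrow> (int \<Rightarrow> real) \<Rightarrow> (int \<Rightarrow> real) set" where
  "lpw p v = {x. (\<lambda>n. \<bar>x n\<bar> powr p * v n) summable_on UNIV}"

definition lpw_norm :: "real \<Rightarrow> (int \<Rightarrow> real) \<Rightarrow> (int \<Rightarrow> real) \<Rightarrow> real" where
  "lpw_norm p v x = (\<Sum>\<^sub>\<infinity>n. \<bar>x n\<bar> powr p * v n) powr (1 / p)"

definition fwd_shift :: "(int \<Rightarrow> real) \<Rightarrow> (int \<Rightarrow> real)" where
  "fwd_shift x = (\<lambda>n. x (n - 1))"

definition upper_dens :: "nat set \<Rightarrow> ereal" where
  "upper_dens A = limsup (\<lambda>N. ereal (real (card (A \<inter> {1..N})) / real N))"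

definition lower_dens :: "nat set \<Rightarrow> ereal" where
  "lower_dens A = liminf (\<lambda>N. ereal (real (card (A \<inter> {1..N})) / real N))"

definition dc_scrambled ::
  "'a set \<Rightarrow> ('a \<Rightarrow> 'a \<Rightarrow> real) \<Rightarrow> ('a \<Rightarrow> 'a) \<Rightarrow> 'a set \<Rightarrow> bool" where
  "dc_scrambled X dst T \<Gamma> \<longleftrightarrow> \<Gamma> \<subseteq> X \<and> uncountable \<Gamma> \<and>
     (\<exists>\<epsilon>>0. \<forall>\<delta>>0. \<forall>x\<in>\<Gamma>. \<forall>y\<in>\<Gamma>. x \<noteq> y \<longrightarrow>
        lower_dens {j. dst ((T ^^ j) x) ((T ^^ j) y) < \<epsilon>} = 0 \<and>
        upper_dens {j. dst ((T ^^ j) x) ((T ^^ j) y) < \<delta>} = 1)"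

definition distr_chaotic ::
  "'a set \<Rightarrow> ('a \<Rightarrow> 'a \<Rightarrow> real) \<Rightarrow> ('a \<Rightarrow> 'a) \<Rightarrow> bool" where
  "distr_chaotic X dst T \<longleftrightarrow> (\<exists>\<Gamma>. dc_scrambled X dst T \<Gamma>)"

definition dense_distr_chaotic ::
  "'a set \<Rightarrow> ('a \<Rightarrow> 'a \<Rightarrow> real) \<Rightarrow> ('a \<Rightarrow> 'a) \<Rightarrow> bool" where
  "dense_distr_chaotic X dst T \<longleftrightarrow> (\<exists>\<Gamma>. dc_scrambled X dst T \<Gamma> \<and>
      (\<forall>x\<in>X. \<forall>e>0. \<exists>y\<in>\<Gamma>. dst x y < e))"

definition lpw_dist :: "real \<Rightarrow> (int \<Rightarrow> real) \<Rightarrow> (int \<Rightarrow> real) \<Rightarrow> (int \<Rightarrow> real) \<Rightarrow> real" where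
  "lpw_dist p v x y = lpw_norm p v (\<lambda>n. x n - y n)"

end

theory Submission
  imports Defs
begin

text \<open>
  Write \<open>mass a Z j = (\<Sum>m\<in>Z. a m * v (m + j))\<close>, so that \<open>\<parallel>F^j x\<parallel>^p = mass \<bar>x\<bar>^p (supp x) j\<close>,
  and \<open>v (n + 1) \<le> C v n\<close>. Both directions go through a criterion on the weights:
  (G) for every \<open>K\<close> there are finitely supported unit vectors whose orbit exceeds \<open>K\<close> on a fixed
  proportion \<open>\<epsilon>\<close> of arbitrarily long intervals \<open>[1, N]\<close>, and (W) for every window \<open>[-R, R]\<close> and
  \<open>\<delta> > 0\<close>, the times \<open>j\<close> at which all weights \<open>v (m + j)\<close>, \<open>\<bar>m\<bar> \<le> R\<close>, are below \<open>\<delta>\<close> have upper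
  density 1.

  If \<open>F\<close> is distributionally chaotic, the difference \<open>z\<close> of two scrambled points has an orbit that
  is small on a set of upper density 1, which gives (W) through one nonzero coordinate of \<open>z\<close>,
  and not small on a set of upper density 1, which gives (G) after restarting a finite part of
  \<open>z\<close> at a time where its orbit is tiny. Hypotheses (i) and (ii) give (W) and (G) directly.

  Conversely, since orbits grow at most geometrically, (G) can be upgraded to blocks that are
  large on most of a long interval and supported outside any prescribed window. Inductively,
  block \<open>b\<close> is placed beyond all earlier ones, is negligible up to a horizon, large on most of its
  own interval, and is followed by a far longer stretch of mostly quiet times (W) at which all
  earlier blocks are negligible. Distributing the blocks among the points \<open>y_q\<close> of a dense
  sequence and among the digits of \<open>\<sigma> \<in> 2^\<nat>\<close>, the vectors \<open>y_q + (\<Sum> selected blocks)^(1/p)\<close> form a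
  dense uncountable scrambled set: two of them differ by a whole block infinitely often, and
  are close on the quiet stretches.
\<close>

section \<open>Densities\<close>

definition full_upper_dens :: "nat set \<Rightarrow> bool" where
  "full_upper_dens A \<longleftrightarrow> (\<forall>\<theta>>0. \<forall>M. \<exists>N\<ge>M. N > 0 \<and> real (card (A \<inter> {1..N})) \<ge> (1 - \<theta>) * real N)"

definition null_lower_dens :: "nat set \<Rightarrow> bool" where
  "null_lower_dens A \<longleftrightarrow> (\<forall>\<theta>>0. \<forall>M. \<exists>N\<ge>M. N > 0 \<and> real (card (A \<inter> {1..N})) \<le> \<theta> * real N)"

lemma card_Int_upto_le: "card (A \<inter> {1..N}) \<le> N"
proof -
  have "card (A \<inter> {1..N}) \<le> card {1..N}" by (intro card_mono) auto
  thus ?thesis by simp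
qed

lemma upper_dens_eq_1_iff: "upper_dens A = 1 \<longleftrightarrow> full_upper_dens A"
proof
  let ?r = "\<lambda>N. ereal (real (card (A \<inter> {1..N})) / real N)"
  assume h: "upper_dens A = 1"
  show "full_upper_dens A" unfolding full_upper_dens_def
  proof (intro allI impI)
    fix \<theta> :: real and M :: nat assume th: "\<theta> > 0"
    show "\<exists>N\<ge>M. N > 0 \<and> real (card (A \<inter> {1..N})) \<ge> (1 - \<theta>) * real N"
    proof (rule ccontr)
      assume "\<not> ?thesis"
      hence b: "\<forall>N\<ge>max M 1. real (card (A \<inter> {1..N})) < (1 - \<theta>) * real N" by force
      have "eventually (\<lambda>N. ?r N \<le> ereal (1 - \<theta>)) sequentially"
        unfolding eventually_sequentially
      proof (intro exI[of _ "max M 1"] allI impI)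
        fix N assume "N \<ge> max M 1"
        with b have "real (card (A \<inter> {1..N})) < (1 - \<theta>) * real N" by auto
        moreover have "real N > 0" using \<open>N \<ge> max M 1\<close> by auto
        ultimately show "?r N \<le> ereal (1 - \<theta>)" by (simp add: divide_simps)
      qed
      hence "limsup ?r \<le> ereal (1 - \<theta>)" by (intro Limsup_bounded) auto
      with h th show False unfolding upper_dens_def by simp
    qed
  qed
next
  let ?r = "\<lambda>N. ereal (real (card (A \<inter> {1..N})) / real N)"
  assume h: "full_upper_dens A"
  have "\<forall>N. ?r N \<le> 1"
    using card_Int_upto_le[of A] by (auto simp: divide_simps)
  hence le: "limsup ?r \<le> 1"
    by (intro Limsup_bounded always_eventually) auto
  have ge: "limsup ?r \<ge> 1"
  proof (rule ccontr)
    assume "\<not> limsup ?r \<ge> 1"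
    hence lt: "limsup ?r < 1" by simp
    then obtain y where y0: "limsup ?r < ereal y" "ereal y < 1"
      using ereal_dense2 by blast
    hence y: "limsup ?r < ereal y" "y < 1" by auto
    have "eventually (\<lambda>N. ?r N < ereal y) sequentially"
      using y(1) Limsup_le_iff[where C="limsup ?r" and F=sequentially and X="?r"] by auto
    then obtain M where M: "\<forall>N\<ge>M. ?r N < ereal y" unfolding eventually_sequentially by auto
    obtain N where N: "N \<ge> M" "N > 0" "real (card (A \<inter> {1..N})) \<ge> (1 - (1 - y)) * real N"
      using h y(2) unfolding full_upper_dens_def by (meson diff_gt_0_iff_gt)
    from M N(1) have "real (card (A \<inter> {1..N})) / real N < y" by auto
    with N(2,3) show False by (simp add: divide_simps)
  qed
  from le ge show "upper_dens A = 1" unfolding upper_dens_def by simp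
qed

lemma lower_dens_eq_0_iff: "lower_dens A = 0 \<longleftrightarrow> null_lower_dens A"
proof
  let ?r = "\<lambda>N. ereal (real (card (A \<inter> {1..N})) / real N)"
  assume h: "lower_dens A = 0"
  show "null_lower_dens A" unfolding null_lower_dens_def
  proof (intro allI impI)
    fix \<theta> :: real and M :: nat assume th: "\<theta> > 0"
    show "\<exists>N\<ge>M. N > 0 \<and> real (card (A \<inter> {1..N})) \<le> \<theta> * real N"
    proof (rule ccontr)
      assume "\<not> ?thesis"
      hence b: "\<forall>N\<ge>max M 1. real (card (A \<inter> {1..N})) > \<theta> * real N" by force
      have "eventually (\<lambda>N. ?r N \<ge> ereal \<theta>) sequentially"
        unfolding eventually_sequentially
      proof (intro exI[of _ "max M 1"] allI impI)
        fix N assume "N \<ge> max M 1"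
        with b have "real (card (A \<inter> {1..N})) > \<theta> * real N" by auto
        moreover have "real N > 0" using \<open>N \<ge> max M 1\<close> by auto
        ultimately show "?r N \<ge> ereal \<theta>" by (simp add: divide_simps)
      qed
      hence "liminf ?r \<ge> ereal \<theta>" by (intro Liminf_bounded) auto
      with h th show False unfolding lower_dens_def by simp
    qed
  qed
next
  let ?r = "\<lambda>N. ereal (real (card (A \<inter> {1..N})) / real N)"
  assume h: "null_lower_dens A"
  have ge: "liminf ?r \<ge> 0"
    by (intro Liminf_bounded) auto
  have le: "liminf ?r \<le> 0"
  proof (rule ccontr)
    assume "\<not> liminf ?r \<le> 0"
    hence lt: "liminf ?r > 0" by simp
    then obtain y where y0: "0 < ereal y" "ereal y < liminf ?r"
      using ereal_dense2 by blast
    hence y: "ereal y < liminf ?r" "y > 0" by auto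
    have "eventually (\<lambda>N. ereal y < ?r N) sequentially"
      using y(1) le_Liminf_iff[where C="liminf ?r" and F=sequentially and X="?r"] by auto
    then obtain M where M: "\<forall>N\<ge>M. ereal y < ?r N" unfolding eventually_sequentially by auto
    obtain N where N: "N \<ge> M" "N > 0" "real (card (A \<inter> {1..N})) \<le> (y/2) * real N"
      using h y(2) unfolding null_lower_dens_def by (meson half_gt_zero)
    from M N(1) have "y < real (card (A \<inter> {1..N})) / real N" by auto
    with N(2,3) y(2) show False by (simp add: divide_simps)
  qed
  from le ge show "lower_dens A = 0" unfolding lower_dens_def by simp
qed

lemma full_upper_dens_shift:
  assumes "full_upper_dens A" and "\<And>j. j \<in> A \<Longrightarrow> j \<ge> n0 \<Longrightarrow> j + s \<in> B"
  shows "full_upper_dens B"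
  unfolding full_upper_dens_def
proof (intro allI impI)
  fix \<theta> :: real and M :: nat assume th: "\<theta> > 0"
  obtain N where N: "N \<ge> M + nat \<lceil>2 * real (n0 + s) / \<theta>\<rceil>" "N > 0"
      "real (card (A \<inter> {1..N})) \<ge> (1 - \<theta>/2) * real N"
    using assms(1) th unfolding full_upper_dens_def by (meson half_gt_zero)
  have Nb: "real N * \<theta> \<ge> 2 * real (n0 + s)"
  proof -
    have "real N \<ge> 2 * real (n0 + s) / \<theta>" using N(1) by linarith
    thus ?thesis using th by (simp add: divide_simps)
  qed
  let ?A1 = "A \<inter> {1..N} \<inter> {n0..}"
  have "A \<inter> {1..N} \<subseteq> ?A1 \<union> {..<n0}" by auto
  hence "card (A \<inter> {1..N}) \<le> card (?A1 \<union> {..<n0})" by (intro card_mono) auto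
  also have "\<dots> \<le> card ?A1 + n0" using card_Un_le[of ?A1 "{..<n0}"] by simp
  finally have c1: "card (A \<inter> {1..N}) \<le> card ?A1 + n0" .
  have "card ?A1 = card ((\<lambda>j. j + s) ` ?A1)" by (intro card_image[symmetric]) (auto simp: inj_on_def)
  also have "\<dots> \<le> card (B \<inter> {1..N+s})" by (intro card_mono) (auto intro: assms(2))
  finally have c: "card (A \<inter> {1..N}) \<le> card (B \<inter> {1..N+s}) + n0" using c1 by linarith
  have "\<theta> * real s \<ge> 0" using th by simp
  hence "(1 - \<theta>) * real (N + s) \<le> (1 - \<theta>/2) * real N - real n0"
    using Nb by (simp add: algebra_simps)
  also have "\<dots> \<le> real (card (B \<inter> {1..N+s}))" using N(3) c by linarith
  finally show "\<exists>N'\<ge>M. N' > 0 \<and> real (card (B \<inter> {1..N'})) \<ge> (1 - \<theta>) * real N'"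
    using N by (intro exI[of _ "N+s"]) auto
qed

lemma full_upper_dens_mono:
  "full_upper_dens A \<Longrightarrow> A \<subseteq> B \<Longrightarrow> full_upper_dens B"
  using full_upper_dens_shift[of A 0 0 B] by auto

lemma full_upper_dens_nonempty: "full_upper_dens A \<Longrightarrow> A \<noteq> {}"
proof -
  assume "full_upper_dens A"
  then obtain N where "N > 0" "real (card (A \<inter> {1..N})) \<ge> (1 - 1/2) * real N"
    unfolding full_upper_dens_def by (meson half_gt_zero zero_less_one)
  thus ?thesis by auto
qed

lemma card_Int_upto_disjoint:
  assumes "A \<inter> B = {}" shows "card (A \<inter> {1..N}) + card (B \<inter> {1..N}) \<le> N"
proof -
  have "card (A \<inter> {1..N}) + card (B \<inter> {1..N}) = card ((A \<inter> {1..N}) \<union> (B \<inter> {1..N}))"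
    using assms by (intro card_Un_disjoint[symmetric]) auto
  also have "\<dots> \<le> card {1..N}" by (intro card_mono) auto
  finally show ?thesis by simp
qed

lemma card_upto_add:
  "card {j\<in>{1..a+b}. P j} = card {j\<in>{1..a}. P j} + card {j\<in>{1..b::nat}. P (a+j)}"
proof -
  have e: "{j\<in>{1..a+b}. P j} = {j\<in>{1..a}. P j} \<union> (\<lambda>j. a + j) ` {j\<in>{1..b}. P (a+j)}"
  proof (intro set_eqI iffI)
    fix x assume "x \<in> {j\<in>{1..a+b}. P j}"
    thus "x \<in> {j\<in>{1..a}. P j} \<union> (\<lambda>j. a + j) ` {j\<in>{1..b}. P (a+j)}"
    proof (cases "x \<le> a")
      case False
      hence "x = a + (x - a)" "x - a \<in> {j\<in>{1..b}. P (a+j)}" using \<open>x \<in> _\<close> by auto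
      thus ?thesis by blast
    qed simp
  qed auto
  have "card {j\<in>{1..a+b}. P j} = card {j\<in>{1..a}. P j} + card ((\<lambda>j. a + j) ` {j\<in>{1..b}. P (a+j)})"
    unfolding e by (intro card_Un_disjoint) auto
  also have "card ((\<lambda>j. a + j) ` {j\<in>{1..b}. P (a+j)}) = card {j\<in>{1..b}. P (a+j)}"
    by (intro card_image) (auto simp: inj_on_def)
  finally show ?thesis .
qed

lemma card_upto_compl: "card {j\<in>{1..n::nat}. P j} + card {j\<in>{1..n}. \<not> P j} = n"
proof -
  have "card {j\<in>{1..n::nat}. P j} + card {j\<in>{1..n}. \<not> P j} = card ({j\<in>{1..n::nat}. P j} \<union> {j\<in>{1..n}. \<not> P j})"
    by (intro card_Un_disjoint[symmetric]) auto
  also have "{j\<in>{1..n::nat}. P j} \<union> {j\<in>{1..n}. \<not> P j} = {1..n}" by auto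
  finally show ?thesis by simp
qed

lemma card_upto_mono:
  "(\<And>j. j \<in> {1..n::nat} \<Longrightarrow> P j \<Longrightarrow> Q j) \<Longrightarrow> card {j\<in>{1..n}. P j} \<le> card {j\<in>{1..n}. Q j}"
  by (intro card_mono) auto

lemma card_upto_le: "card {j\<in>{1..n::nat}. P j} \<le> n"
  using card_upto_compl[of n P] by linarith

lemma null_lower_dens_compl_shift:
  assumes "null_lower_dens A"
  shows "\<exists>N\<ge>M. N \<ge> 1 \<and> real (card {i\<in>{1..N}. j0 + i \<notin> A}) \<ge> 1/4 * real N"
proof -
  obtain N' where N': "N' \<ge> M + 2 * j0 + 1" "real (card (A \<inter> {1..N'})) \<le> 1/4 * real N'"
    using assms[unfolded null_lower_dens_def, rule_format, of "1/4" "M + 2 * j0 + 1"] by auto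
  define N where "N = N' - j0"
  have "card {j\<in>{1..N'}. j \<notin> A} = card {j\<in>{1..j0}. j \<notin> A} + card {i\<in>{1..N}. j0 + i \<notin> A}"
    using card_upto_add[of j0 N "\<lambda>j. j \<notin> A"] N'(1) unfolding N_def by simp
  moreover have "card {j\<in>{1..j0}. j \<notin> A} \<le> j0" by (rule card_upto_le)
  moreover have "A \<inter> {1..N'} = {j\<in>{1..N'}. j \<in> A}" by auto
  hence "card (A \<inter> {1..N'}) + card {j\<in>{1..N'}. j \<notin> A} = N'" by (simp only: card_upto_compl)
  moreover have "real (4 * card (A \<inter> {1..N'})) \<le> real N'" using N'(2) by simp
  hence "4 * card (A \<inter> {1..N'}) \<le> N'" by (simp only: of_nat_le_iff)
  ultimately have "N \<le> 4 * card {i\<in>{1..N}. j0 + i \<notin> A}" using N'(1) unfolding N_def by linarith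
  hence "real N \<le> 4 * real (card {i\<in>{1..N}. j0 + i \<notin> A})" by (metis of_nat_le_iff of_nat_mult of_nat_numeral)
  moreover have "N \<ge> M" "N \<ge> 1" using N'(1) unfolding N_def by auto
  ultimately show ?thesis by (intro exI[of _ N]) auto
qed

section \<open>Excursions of sequences of bounded growth\<close>

lemma short_or_crowded_le:
  fixes l M br :: nat and \<theta> :: real
  assumes th: "\<theta> > 0" and bad: "\<not> (l \<ge> M \<and> real br \<le> \<theta> * real l)" and br: "l \<noteq> 0 \<Longrightarrow> br \<ge> 1"
  shows "real l \<le> (real M + 1/\<theta>) * real br"
proof (cases "l < M")
  case True
  show ?thesis
  proof (cases "l = 0")
    case False
    with True br have "l \<le> M * br" by (metis le_trans less_imp_le mult_le_mono2 mult_1_right)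
    hence "real l \<le> real M * real br" by (metis of_nat_le_iff of_nat_mult)
    moreover have "0 \<le> 1/\<theta> * real br" using th by simp
    ultimately show ?thesis by (simp add: distrib_right)
  qed (use th in simp)
next
  case False
  with bad have "real br > \<theta> * real l" by auto
  hence "real l < real br / \<theta>" using th by (simp add: field_simps)
  moreover have "(real M + 1/\<theta>) * real br = real M * real br + real br / \<theta>" by (simp add: distrib_right)
  moreover have "0 \<le> real M * real br" by simp
  ultimately show ?thesis by linarith
qed

text \<open>As \<open>C t < T\<close>, every excursion above \<open>t\<close> starts inside the band \<open>(t, T]\<close>. Cutting off the last
  excursion, if it is short or often in the band, preserves the counting hypothesis on the rest.\<close>
lemma long_high_run_exists:
  fixes f :: "nat \<Rightarrow> real" and t T C \<theta> :: real and M N :: nat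
  assumes f0: "f 0 \<le> t" and step: "\<And>j. f (Suc j) \<le> C * f j" and C0: "C \<ge> 0"
    and CT: "C * t < T" and tT: "t \<le> T" and th: "\<theta> > 0"
    and count: "real (card {j\<in>{1..N}. f j > T}) > (real M + 1/\<theta>) * real (card {j\<in>{1..N}. t < f j \<and> f j \<le> T})"
  shows "\<exists>s l. f s \<le> t \<and> l \<ge> M \<and> s + l \<le> N \<and> (\<forall>j\<in>{1..l}. f (s+j) > t) \<and>
            real (card {j\<in>{1..l}. f (s+j) \<le> T}) \<le> \<theta> * real l"
  using count
proof (induction N rule: less_induct)
  case (less N)
  let ?c = "real M + 1/\<theta>"
  let ?hi = "\<lambda>b. card {j\<in>{1..b}. f j > T}"
  let ?mid = "\<lambda>b. card {j\<in>{1..b}. t < f j \<and> f j \<le> T}"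
  define s0 where "s0 = Max {s\<in>{0..N}. f s \<le> t}"
  have "s0 \<in> {s\<in>{0..N}. f s \<le> t}" unfolding s0_def using f0 by (intro Max_in) auto
  hence s0: "s0 \<le> N" "f s0 \<le> t" by auto
  have above: "f s > t" if "s0 < s" "s \<le> N" for s
    using that Max_ge[of "{s\<in>{0..N}. f s \<le> t}" s] unfolding s0_def by fastforce
  define l where "l = N - s0"
  have N_eq: "N = s0 + l" using s0(1) unfolding l_def by simp
  let ?br = "card {j\<in>{1..l}. t < f (s0+j) \<and> f (s0+j) \<le> T}"
  have hi: "?hi N = ?hi s0 + card {j\<in>{1..l}. f (s0+j) > T}" and mid: "?mid N = ?mid s0 + ?br"
    unfolding N_eq by (rule card_upto_add)+
  have br: "?br = card {j\<in>{1..l}. f (s0+j) \<le> T}"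
    using above unfolding N_eq by (intro arg_cong[of _ _ card]) auto
  show ?case
  proof (cases "l \<ge> M \<and> real ?br \<le> \<theta> * real l")
    case True
    have "\<forall>j\<in>{1..l}. f (s0+j) > t" using above N_eq by simp
    then show ?thesis using True s0(2) br N_eq by (intro exI[of _ s0] exI[of _ l]) simp
  next
    case False
    have "?br \<ge> 1" if "l \<noteq> 0"
    proof -
      have "f (s0 + 1) \<le> C * f s0" using step[of s0] by simp
      also have "\<dots> \<le> C * t" using s0(2) C0 by (rule mult_left_mono)
      finally have "f (s0 + 1) \<le> T" using CT by linarith
      moreover have "t < f (s0 + 1)" using above[of "s0 + 1"] that N_eq by simp
      ultimately have "1 \<in> {j\<in>{1..l}. t < f (s0+j) \<and> f (s0+j) \<le> T}" using that by simp
      hence "{j\<in>{1..l}. t < f (s0+j) \<and> f (s0+j) \<le> T} \<noteq> {}" by blast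
      thus ?thesis by (simp add: Suc_le_eq card_gt_0_iff)
    qed
    with False th have bad: "real l \<le> ?c * real ?br" by (intro short_or_crowded_le) auto
    have "?c * real (?mid N) = ?c * real (?mid s0) + ?c * real ?br"
      using mid by (simp add: distrib_left)
    hence s0_count: "real (?hi s0) > ?c * real (?mid s0)"
      using less.prems hi bad card_upto_le[of l "\<lambda>j. f (s0+j) > T"] by simp
    obtain N' where N': "N' < N" "real (?hi N') > ?c * real (?mid N')"
    proof (cases "s0 = N")
      case True
      have "N \<noteq> 0" using less.prems by (intro notI) simp
      then obtain N' where N_Suc: "N = N' + 1" by (metis Suc_eq_plus1 not0_implies_Suc)
      have drop: "{j\<in>{1..N}. P j} = {j\<in>{1..N'}. P j}" if "\<not> P N" for P :: "nat \<Rightarrow> bool"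
        using that unfolding N_Suc by (auto simp: le_Suc_eq)
      have "f N \<le> t" using s0(2) True by simp
      hence "?hi N = ?hi N'" "?mid N = ?mid N'"
        using drop[of "\<lambda>j. T < f j"] drop[of "\<lambda>j. t < f j \<and> f j \<le> T"] tT by simp_all
      then show ?thesis using that[of N'] s0_count True N_Suc by simp
    next
      case False
      with s0(1) have "s0 < N" by simp
      then show ?thesis using that s0_count by simp
    qed
    obtain s l' where "f s \<le> t" "l' \<ge> M" "s + l' \<le> N'" "\<forall>j\<in>{1..l'}. f (s+j) > t"
        "real (card {j\<in>{1..l'}. f (s+j) \<le> T}) \<le> \<theta> * real l'"
      using less.IH[OF N'] by blast
    moreover have "s + l' \<le> N" using \<open>s + l' \<le> N'\<close> N'(1) by simp
    ultimately show ?thesis by blast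
  qed
qed

lemma disjoint_family_small_member:
  assumes R: "R > 0" and sub: "\<And>r. r < R \<Longrightarrow> B r \<subseteq> S" and fin: "finite S"
    and disj: "disjoint_family_on B {..<R}"
  obtains r where "r < R" "real R * real (card (B r)) \<le> real (card S)"
proof (rule ccontr)
  assume "\<not> thesis"
  hence big: "\<forall>r<R. real (card S) < real R * real (card (B r))" using that by force
  have "(\<Sum>r<R. card (B r)) = card (\<Union>r<R. B r)"
    using sub fin disj by (intro card_UN_disjoint[symmetric]) (auto simp: disjoint_family_on_def intro: finite_subset)
  also have "\<dots> \<le> card S" using sub fin by (intro card_mono) auto
  finally have "real (\<Sum>r<R. card (B r)) \<le> real (card S)" by (rule of_nat_mono)
  hence "real R * (\<Sum>r<R. real (card (B r))) \<le> real R * real (card S)" by (intro mult_left_mono) auto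
  moreover have "(\<Sum>r<R. real (card S)) < (\<Sum>r<R. real R * real (card (B r)))"
    using R big by (intro sum_strict_mono) auto
  ultimately show False by (simp add: sum_distrib_left)
qed

lemma sparse_band_exists:
  fixes f :: "nat \<Rightarrow> real" and \<rho> :: real
  assumes rho1: "\<rho> > 1" and R: "R \<ge> 1"
  obtains r where "r < R" "real R * real (card {j\<in>{1..N}. \<rho> ^ r < f j \<and> f j \<le> \<rho> ^ (r+1)}) \<le> real N"
proof -
  define B where "B r = {j\<in>{1..N}. \<rho> ^ r < f j \<and> f j \<le> \<rho> ^ (r+1)}" for r
  have "B r \<inter> B r' = {}" if "r < r'" for r r'
  proof -
    have "\<rho> ^ (r+1) \<le> \<rho> ^ r'" using rho1 that by (intro power_increasing) auto
    thus ?thesis unfolding B_def by auto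
  qed
  hence "disjoint_family_on B {..<R}"
    unfolding disjoint_family_on_def by (metis inf_commute linorder_neqE_nat)
  moreover have "B r \<subseteq> {1..N}" for r unfolding B_def by auto
  ultimately obtain r where "r < R" "real R * real (card (B r)) \<le> real (card {1..N})"
    using disjoint_family_small_member[of R B "{1..N}"] R by auto
  thus ?thesis using that unfolding B_def by simp
qed

text \<open>If \<open>f\<close> grows at rate at most \<open>C\<close> and is huge on a fixed proportion of \<open>[1, N]\<close>, then one of
  the geometric bands \<open>(\<rho>^r, \<rho>^(r+1)]\<close> is rarely visited; \<open>long_high_run_exists\<close> then yields an
  excursion above \<open>\<rho>^r\<close> which, rescaled by \<open>\<rho>^-r\<close>, stays above \<open>\<rho> > K\<close> most of the time.\<close>
lemma rescaled_high_run_exists: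
  fixes C K \<epsilon> \<theta> :: real and M :: nat
  assumes C1: "C \<ge> 1" and eps: "\<epsilon> > 0" and th: "\<theta> > 0"
  obtains k0 where "\<And>f N. (\<And>j. f (Suc j) \<le> C * f j) \<Longrightarrow> f 0 \<le> 1 \<Longrightarrow> N \<ge> 1 \<Longrightarrow>
      real (card {j\<in>{1..N}. f j \<ge> k0}) \<ge> \<epsilon> * real N \<Longrightarrow>
      \<exists>s c L. c > 0 \<and> L \<ge> M \<and> c * f s \<le> 1 \<and>
        real (card {j\<in>{1..L}. c * f (s + j) \<ge> K}) \<ge> (1 - \<theta>) * real L"
proof -
  define \<rho> where "\<rho> = max (C + 1) (K + 1)"
  have rhoC: "\<rho> > C" and rhoK: "\<rho> > K" and rho1: "\<rho> > 1" using C1 unfolding \<rho>_def by auto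
  define cc where "cc = real M + 1 / \<theta>"
  define R where "R = nat \<lceil>cc / \<epsilon>\<rceil> + 1"
  have R1: "R \<ge> 1" unfolding R_def by simp
  have Rbig: "\<epsilon> * real R > cc"
  proof -
    have "real R > cc / \<epsilon>" unfolding R_def by linarith
    thus ?thesis using eps by (simp add: divide_simps mult.commute)
  qed
  show ?thesis
  proof (rule that[of "\<rho> ^ (R+1)"])
    fix f :: "nat \<Rightarrow> real" and N :: nat
    assume step: "\<And>j. f (Suc j) \<le> C * f j" and f0: "f 0 \<le> 1" and N1: "N \<ge> 1"
      and cnt: "real (card {j\<in>{1..N}. f j \<ge> \<rho> ^ (R+1)}) \<ge> \<epsilon> * real N"
    define B where "B r = {j\<in>{1..N}. \<rho> ^ r < f j \<and> f j \<le> \<rho> ^ (r+1)}" for r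
    obtain r where r: "r < R" "real R * real (card (B r)) \<le> real N"
      using sparse_band_exists[OF rho1 R1] unfolding B_def by blast
    let ?t = "\<rho> ^ r" and ?T = "\<rho> ^ (r+1)"
    have tpos: "?t > 0" and t1: "?t \<ge> 1" using rho1 by simp_all
    have "card {j\<in>{1..N}. f j \<ge> \<rho> ^ (R+1)} \<le> card {j\<in>{1..N}. f j > ?T}"
    proof (intro card_upto_mono)
      fix j assume "f j \<ge> \<rho> ^ (R+1)"
      moreover have "\<rho> ^ (r+1) < \<rho> ^ (R+1)" using rho1 r(1) by (intro power_strict_increasing) auto
      ultimately show "f j > ?T" by simp
    qed
    moreover have "cc * real (card (B r)) < \<epsilon> * real N"
    proof -
      have "cc * real (card (B r)) \<le> cc * (real N / real R)"
        using r(2) R1 th by (intro mult_left_mono) (auto simp: cc_def divide_simps mult.commute)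
      also have "\<dots> < \<epsilon> * real N"
        using mult_strict_right_mono[OF Rbig, of "real N"] N1 R1 by (simp add: divide_simps algebra_simps)
      finally show ?thesis .
    qed
    ultimately have "real (card {j\<in>{1..N}. f j > ?T}) > cc * real (card (B r))"
      using cnt by linarith
    moreover have "C * ?t < ?T" using rhoC tpos by simp
    moreover have "C \<ge> 0" using C1 by simp
    moreover have "f 0 \<le> ?t" using f0 t1 by linarith
    moreover have "?t \<le> ?T" using rho1 tpos by simp
    ultimately obtain s l where sl: "f s \<le> ?t" "l \<ge> M" "\<forall>j\<in>{1..l}. f (s+j) > ?t"
        "real (card {j\<in>{1..l}. f (s+j) \<le> ?T}) \<le> \<theta> * real l"
      using long_high_run_exists[where f=f and t="?t" and T="?T" and C=C and \<theta>=\<theta> and M=M and N=N]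
        step th unfolding B_def cc_def by blast
    define c where "c = 1 / ?t"
    have cpos: "c > 0" and ct: "c * ?t = 1" and cT: "c * ?T = \<rho>"
      unfolding c_def using tpos rho1 by simp_all
    have "c * f s \<le> 1" using sl(1) cpos ct by (metis mult_left_mono less_imp_le)
    moreover have "real (card {j\<in>{1..l}. c * f (s + j) \<ge> K}) \<ge> (1 - \<theta>) * real l"
    proof -
      have "card {j\<in>{1..l}. \<not> f (s+j) \<le> ?T} \<le> card {j\<in>{1..l}. c * f (s + j) \<ge> K}"
      proof (intro card_upto_mono)
        fix j assume "\<not> f (s+j) \<le> ?T"
        hence "c * f (s+j) > c * ?T" using cpos by simp
        thus "c * f (s + j) \<ge> K" using cT rhoK by linarith
      qed
      thus ?thesis using sl(4) card_upto_compl[of l "\<lambda>j. f (s+j) \<le> ?T"] by (simp add: algebra_simps)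
    qed
    ultimately show "\<exists>s c L. c > 0 \<and> L \<ge> M \<and> c * f s \<le> 1 \<and>
        real (card {j\<in>{1..L}. c * f (s + j) \<ge> K}) \<ge> (1 - \<theta>) * real L"
      using cpos sl(2) by blast
  qed
qed

lemma card_upto_delayed_transfer:
  fixes g h u :: "nat \<Rightarrow> real"
  assumes big: "real (card {j\<in>{1..L}. g j + h j \<ge> K}) \<ge> (1 - \<theta>) * real L"
    and small: "real (card {j\<in>{1..L}. h j \<ge> K/2}) < (1 - 2 * \<theta>) * real L"
    and dom: "\<And>j. d < j \<Longrightarrow> g j \<ge> K/2 \<Longrightarrow> u (j - d) \<ge> k"
    and long: "2 * real d \<le> \<theta> * real L"
  shows "real (card {i\<in>{1..L}. u i \<ge> k}) \<ge> \<theta>/2 * real L"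
proof -
  let ?U = "{i\<in>{1..L}. u i \<ge> k}" and ?H = "{j\<in>{1..L}. h j \<ge> K/2}"
  have "{j\<in>{1..L}. g j + h j \<ge> K} \<subseteq> {1..d} \<union> (\<lambda>i. i + d) ` ?U \<union> ?H"
  proof
    fix j assume j: "j \<in> {j\<in>{1..L}. g j + h j \<ge> K}"
    show "j \<in> {1..d} \<union> (\<lambda>i. i + d) ` ?U \<union> ?H"
    proof (cases "d < j \<and> h j < K/2")
      case True
      hence "j - d \<in> ?U" using j dom[of j] by auto
      moreover have "j = (j - d) + d" using True by simp
      ultimately show ?thesis by blast
    qed (use j in auto)
  qed
  hence "card {j\<in>{1..L}. g j + h j \<ge> K} \<le> card ({1..d} \<union> (\<lambda>i. i + d) ` ?U \<union> ?H)"
    by (intro card_mono) auto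
  also have "\<dots> \<le> d + card ?U + card ?H"
    using card_Un_le[of "{1..d} \<union> (\<lambda>i. i + d) ` ?U" ?H] card_Un_le[of "{1..d}" "(\<lambda>i. i + d) ` ?U"]
      card_image_le[of ?U "\<lambda>i. i + d"] by simp
  finally have "real (card {j\<in>{1..L}. g j + h j \<ge> K}) \<le> real (d + card ?U + card ?H)"
    by (rule of_nat_mono)
  hence "real (card {j\<in>{1..L}. g j + h j \<ge> K}) \<le> real d + real (card ?U) + real (card ?H)"
    by (simp only: of_nat_add)
  with big small long show ?thesis by (simp add: algebra_simps)
qed

lemma finite_sum_approx_infsum:
  fixes f :: "'a \<Rightarrow> real"
  assumes sf: "f summable_on UNIV" and f0: "\<And>x. f x \<ge> 0" and e: "\<eta> > 0"
  shows "\<exists>F. finite F \<and> sum f F > infsum f UNIV - \<eta>"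
proof -
  have Ssup: "infsum f UNIV = (SUP F\<in>{F. finite F \<and> F \<subseteq> UNIV}. sum f F)"
    using sf f0 by (intro infsum_nonneg_is_SUPREMUM_real) auto
  have bdd: "bdd_above (sum f ` {F. finite F \<and> F \<subseteq> UNIV})"
    using sf f0 by (intro bdd_aboveI2[of _ _ "infsum f UNIV"] finite_sum_le_infsum) auto
  have "infsum f UNIV - \<eta> < (SUP F\<in>{F. finite F \<and> F \<subseteq> UNIV}. sum f F)" using e Ssup by simp
  then obtain F where "F \<in> {F. finite F \<and> F \<subseteq> UNIV}" "infsum f UNIV - \<eta> < sum f F"
    using less_cSUP_iff[OF _ bdd] by blast
  thus ?thesis by blast
qed

lemma uncountable_bool_seqs: "uncountable {\<sigma> :: nat \<Rightarrow> bool. \<sigma> 0}"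
proof
  assume cS: "countable {\<sigma> :: nat \<Rightarrow> bool. \<sigma> 0}"
  let ?S = "{\<sigma> :: nat \<Rightarrow> bool. \<sigma> 0}"
  let ?g = "from_nat_into ?S"
  define s where "s n = (if n = 0 then True else \<not> ?g (n - 1) n)" for n
  have "s \<in> ?S" unfolding s_def by simp
  then obtain k where k: "?g k = s" using from_nat_into_surj[OF cS] by blast
  have "s (Suc k) = (\<not> ?g k (Suc k))" unfolding s_def by simp
  also have "\<dots> = (\<not> s (Suc k))" using k by simp
  finally show False by simp
qed

definition list_seq :: "(int \<times> rat) list \<Rightarrow> int \<Rightarrow> real" where
  "list_seq l m = (case map_of l m of None \<Rightarrow> 0 | Some r \<Rightarrow> real_of_rat r)"

definition list_radius :: "(int \<times> rat) list \<Rightarrow> nat" where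
  "list_radius l = sum_list (map (\<lambda>x. nat \<bar>fst x\<bar>) l)"

lemma list_seq_support: "list_seq l m \<noteq> 0 \<Longrightarrow> nat \<bar>m\<bar> \<le> list_radius l"
proof -
  assume "list_seq l m \<noteq> 0"
  then obtain r where "map_of l m = Some r" unfolding list_seq_def by (auto split: option.splits)
  hence "(m, r) \<in> set l" by (rule map_of_SomeD)
  hence "nat \<bar>m\<bar> \<in> set (map (\<lambda>x. nat \<bar>fst x\<bar>) l)"
    by (simp add: image_iff) (intro bexI[of _ "(m, r)"], auto)
  hence "nat \<bar>m\<bar> \<le> sum_list (map (\<lambda>x. nat \<bar>fst x\<bar>) l)" by (rule member_le_sum_list) simp
  thus ?thesis unfolding list_radius_def .
qed

text \<open>Taking only the first component of \<open>prod_decode q\<close> makes every list recur for arbitrarily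
  large \<open>q\<close>.\<close>
definition enum_list :: "nat \<Rightarrow> (int \<times> rat) list" where
  "enum_list q = from_nat (fst (prod_decode q))"

definition enum_seq :: "nat \<Rightarrow> int \<Rightarrow> real" where
  "enum_seq q = list_seq (enum_list q)"

definition enum_radius :: "nat \<Rightarrow> nat" where
  "enum_radius b = (\<Sum>q\<le>b. list_radius (enum_list q))"

lemma enum_radius_mono: "b \<le> b' \<Longrightarrow> enum_radius b \<le> enum_radius b'"
  unfolding enum_radius_def by (intro sum_mono2) auto

lemma enum_seq_support:
  "enum_seq q m \<noteq> 0 \<Longrightarrow> q \<le> b \<Longrightarrow> nat \<bar>m\<bar> \<le> enum_radius b"
proof -
  assume "enum_seq q m \<noteq> 0" "q \<le> b"
  hence "nat \<bar>m\<bar> \<le> list_radius (enum_list q)" unfolding enum_seq_def using list_seq_support by blast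
  also have "list_radius (enum_list q) \<le> enum_radius b" unfolding enum_radius_def using \<open>q \<le> b\<close>
    by (intro member_le_sum) auto
  finally show ?thesis .
qed

definition abs_bound :: "int set \<Rightarrow> nat" where
  "abs_bound Z = Max (insert 0 ((\<lambda>m. nat \<bar>m\<bar>) ` Z))"

lemma abs_bound_ge:
  "finite Z \<Longrightarrow> m \<in> Z \<Longrightarrow> nat \<bar>m\<bar> \<le> abs_bound Z"
  unfolding abs_bound_def by (intro Max_ge) auto

text \<open>Block \<open>b\<close> is used by the points with index \<open>owner b\<close> whose digit \<open>coord b\<close> is set.\<close>
definition owner :: "nat \<Rightarrow> nat" where "owner b = fst (prod_decode b)"
definition coord :: "nat \<Rightarrow> nat" where "coord b = fst (prod_decode (snd (prod_decode b)))"

lemma owner_le: "owner b \<le> b"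
proof -
  have "fst (prod_decode b) \<le> prod_encode (prod_decode b)"
    by (metis le_prod_encode_1 prod.collapse)
  thus ?thesis unfolding owner_def by simp
qed

lemma owner_encode: "owner (prod_encode (q, prod_encode (k, i))) = q" unfolding owner_def by simp
lemma coord_encode: "coord (prod_encode (q, prod_encode (k, i))) = k" unfolding coord_def by simp
lemma encode_ge: "prod_encode (q, prod_encode (k, i)) \<ge> i"
  by (meson le_prod_encode_2 order_trans)

lemma half_power_tail_le: "(\<Sum>c\<in>{c. c < K \<and> q \<le> c}. (1/2::real) ^ c) \<le> 2 * (1/2) ^ q"
proof -
  have "{c. c < K \<and> q \<le> c} \<subseteq> (\<lambda>i. q + i) ` {..<K}"
  proof
    fix c assume "c \<in> {c. c < K \<and> q \<le> c}"
    thus "c \<in> (\<lambda>i. q + i) ` {..<K}" using image_eqI[of c "\<lambda>i. q+i" "c - q" "{..<K}"] by auto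
  qed
  hence "(\<Sum>c\<in>{c. c < K \<and> q \<le> c}. (1/2::real) ^ c) \<le> (\<Sum>c\<in>(\<lambda>i. q + i) ` {..<K}. (1/2::real) ^ c)"
    by (intro sum_mono2) auto
  also have "\<dots> = (\<Sum>i<K. (1/2::real) ^ (q + i))" by (subst sum.reindex) (auto simp: inj_on_def)
  also have "\<dots> = (1/2) ^ q * (\<Sum>i<K. (1/2::real) ^ i)" by (simp add: power_add sum_distrib_left)
  also have "(\<Sum>i<K. (1/2::real) ^ i) = (1 - (1/2)^K) / (1/2)" by (subst sum_gp_strict) simp
  also have "\<dots> \<le> 2" by simp
  finally show ?thesis by (simp add: mult.commute mult_left_mono)
qed

section \<open>Orbits of blocks under the forward shift\<close>

locale weighted_shift =
  fixes p :: real and v :: "int \<Rightarrow> real" and C :: real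
  assumes p1: "1 \<le> p" and vpos: "\<And>n. v n > 0" and C1: "C \<ge> 1" and vstep: "\<And>n. v (n+1) \<le> C * v n"
begin

definition mass :: "(int \<Rightarrow> real) \<Rightarrow> int set \<Rightarrow> nat \<Rightarrow> real" where
  "mass a Z j = (\<Sum>m\<in>Z. a m * v (m + int j))"

lemma v_shift_le: "v (m + int k) \<le> C ^ k * v m"
proof (induction k)
  case 0 then show ?case by simp
next
  case (Suc k)
  have "v (m + int (Suc k)) = v ((m + int k) + 1)" by (simp add: algebra_simps)
  also have "\<dots> \<le> C * v (m + int k)" by (rule vstep)
  also have "\<dots> \<le> C * (C ^ k * v m)" using Suc C1 by (intro mult_left_mono) auto
  finally show ?case by simp
qed

lemma mass_nonneg: "(\<And>m. a m \<ge> 0) \<Longrightarrow> mass a Z j \<ge> 0"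
  unfolding mass_def using vpos by (intro sum_nonneg) (simp add: less_imp_le)

lemma mass_Suc_le: assumes "\<And>m. a m \<ge> 0" shows "mass a Z (Suc j) \<le> C * mass a Z j"
proof -
  have "mass a Z (Suc j) = (\<Sum>m\<in>Z. a m * v ((m + int j) + 1))" unfolding mass_def by (simp add: algebra_simps)
  also have "\<dots> \<le> (\<Sum>m\<in>Z. a m * (C * v (m + int j)))"
    using assms vstep by (intro sum_mono mult_left_mono) auto
  also have "\<dots> = C * mass a Z j" unfolding mass_def by (simp add: sum_distrib_left algebra_simps)
  finally show ?thesis .
qed

lemma mass_le_power: assumes "\<And>m. a m \<ge> 0" shows "mass a Z j \<le> C ^ j * mass a Z 0"
proof (induction j)
  case 0 then show ?case by simp
next
  case (Suc j)
  have "mass a Z (Suc j) \<le> C * mass a Z j" by (rule mass_Suc_le[OF assms])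
  also have "\<dots> \<le> C * (C ^ j * mass a Z 0)" using Suc C1 by (intro mult_left_mono) auto
  finally show ?case by simp
qed

lemma mass_translate: "mass (\<lambda>m. c * a (m - int s)) ((+) (int s) ` Z) j = c * mass a Z (s + j)"
proof -
  have "mass (\<lambda>m. c * a (m - int s)) ((+) (int s) ` Z) j = (\<Sum>m\<in>Z. c * a m * v (m + int (s + j)))"
    unfolding mass_def by (subst sum.reindex) (auto simp: inj_on_def algebra_simps)
  also have "\<dots> = c * mass a Z (s + j)" unfolding mass_def by (simp add: sum_distrib_left algebra_simps)
  finally show ?thesis .
qed

lemma mass_subset_le:
  "finite Z \<Longrightarrow> Z' \<subseteq> Z \<Longrightarrow> (\<And>m. a m \<ge> 0) \<Longrightarrow> mass a Z' j \<le> mass a Z j"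
  unfolding mass_def using vpos by (intro sum_mono2) (auto simp: less_imp_le)

lemma mass_cmult: "mass (\<lambda>m. c * a m) Z j = c * mass a Z j"
  unfolding mass_def by (simp add: sum_distrib_left algebra_simps)

text \<open>\<open>large_often K \<epsilon> a Z N\<close>: the block of weights \<open>a\<close> on \<open>Z\<close>, i.e. the vector \<open>x\<close> supported on \<open>Z\<close>
  with \<open>\<bar>x m\<bar> ^ p = a m\<close>, has norm at most 1 and \<open>\<parallel>F^j x\<parallel>^p \<ge> K\<close> for a proportion \<open>\<epsilon>\<close> of the
  times \<open>j \<in> [1, N]\<close>.\<close>
definition large_often :: "real \<Rightarrow> real \<Rightarrow> (int \<Rightarrow> real) \<Rightarrow> int set \<Rightarrow> nat \<Rightarrow> bool" where
  "large_often K \<epsilon> a Z N \<longleftrightarrow> finite Z \<and> (\<forall>m. a m \<ge> 0) \<and> mass a Z 0 \<le> 1 \<and> N \<ge> 1 \<and>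
     real (card {j\<in>{1..N}. mass a Z j \<ge> K}) \<ge> \<epsilon> * real N"

lemma large_often_mono:
  assumes "large_often K \<epsilon> a Z N" "K' \<le> K" "\<epsilon>' \<le> \<epsilon>"
  shows "large_often K' \<epsilon>' a Z N"
proof -
  have "real (card {j\<in>{1..N}. mass a Z j \<ge> K}) \<le> real (card {j\<in>{1..N}. mass a Z j \<ge> K'})"
    using assms(2) by (intro of_nat_mono card_upto_mono) auto
  moreover have "\<epsilon>' * real N \<le> \<epsilon> * real N" using assms(3) by (intro mult_right_mono) auto
  moreover have "\<epsilon> * real N \<le> real (card {j\<in>{1..N}. mass a Z j \<ge> K})"
    using assms(1) unfolding large_often_def by auto
  ultimately have "\<epsilon>' * real N \<le> real (card {j\<in>{1..N}. mass a Z j \<ge> K'})" by linarith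
  thus ?thesis using assms(1) unfolding large_often_def by auto
qed

lemma growth_amplify:
  assumes eps: "\<epsilon> > 0" and th: "\<theta> > 0"
  obtains k0 where "\<And>a Z N. large_often k0 \<epsilon> a Z N \<Longrightarrow>
     \<exists>s c L. L \<ge> M \<and> large_often K (1 - \<theta>) (\<lambda>m. c * a (m - int s)) ((+) (int s) ` Z) L"
proof -
  from rescaled_high_run_exists[OF C1 eps th, where K=K and M="max M 1"] obtain k0 where k0:
    "\<And>f N. (\<And>j. f (Suc j) \<le> C * f j) \<Longrightarrow> f 0 \<le> 1 \<Longrightarrow> N \<ge> 1 \<Longrightarrow>
      real (card {j\<in>{1..N}. f j \<ge> k0}) \<ge> \<epsilon> * real N \<Longrightarrow>
      \<exists>s c L. c > 0 \<and> L \<ge> max M 1 \<and> c * f s \<le> 1 \<and>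
        real (card {j\<in>{1..L}. c * f (s + j) \<ge> K}) \<ge> (1 - \<theta>) * real L"
    by blast
  show ?thesis
  proof (rule that)
    fix a Z N assume big: "large_often k0 \<epsilon> a Z N"
    then obtain s c L where "c > 0" "L \<ge> max M 1" "c * mass a Z s \<le> 1"
        "real (card {j\<in>{1..L}. c * mass a Z (s + j) \<ge> K}) \<ge> (1 - \<theta>) * real L"
      using k0[of "mass a Z" N] mass_Suc_le[of a Z] unfolding large_often_def by blast
    then show "\<exists>s c L. L \<ge> M \<and> large_often K (1 - \<theta>) (\<lambda>m. c * a (m - int s)) ((+) (int s) ` Z) L"
      using big unfolding large_often_def
      by (intro exI[of _ s] exI[of _ c] exI[of _ L]) (simp add: mass_translate)
  qed
qed

definition growth_on_positive_dens :: bool where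
  "growth_on_positive_dens \<longleftrightarrow> (\<exists>\<epsilon>>0. \<forall>K M. \<exists>a Z N. N \<ge> M \<and> large_often K \<epsilon> a Z N)"

definition quiet_window :: "nat \<Rightarrow> real \<Rightarrow> nat set" where
  "quiet_window R \<delta> = {j. \<forall>m. \<bar>m\<bar> \<le> int R \<longrightarrow> v (m + int j) < \<delta>}"

definition weights_vanish_densely :: bool where
  "weights_vanish_densely \<longleftrightarrow> (\<forall>R \<delta>. \<delta> > 0 \<longrightarrow> full_upper_dens (quiet_window R \<delta>))"

definition unif_weight :: "nat \<Rightarrow> int \<Rightarrow> real" where
  "unif_weight R i = 1 / (v i * real (2 * R + 1))"

definition unif_supp :: "nat \<Rightarrow> int set" where
  "unif_supp R = {int R + 1 .. 3 * int R + 1}"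

lemma unif_weight_nonneg: "unif_weight R i \<ge> 0"
  using vpos[of i] by (simp add: unif_weight_def)

lemma mass_unif_0: "mass (unif_weight R) (unif_supp R) 0 = 1"
proof -
  have "mass (unif_weight R) (unif_supp R) 0 = (\<Sum>i\<in>unif_supp R. 1 / real (2 * R + 1))"
    unfolding mass_def unif_weight_def using vpos by (intro sum.cong) (auto simp: less_imp_neq[symmetric])
  also have "\<dots> = 1" by (simp add: unif_supp_def)
  finally show ?thesis .
qed

lemma mass_window_le_unif:
  assumes a0: "\<forall>m. a m \<ge> 0" and W: "Z \<subseteq> {- int R..int R}" and j: "2 * R + 1 \<le> j"
  shows "mass a Z j \<le>
    C ^ (2 * R + 1) * real (2 * R + 1) * mass (unif_weight R) (unif_supp R) (j - (2 * R + 1)) * mass a Z 0"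
proof -
  define d where "d = 2 * R + 1"
  let ?u = "mass (unif_weight R) (unif_supp R) (j - d)"
  have u0: "?u \<ge> 0" by (intro mass_nonneg unif_weight_nonneg)
  have w: "unif_weight R i = 1 / (v i * real d)" for i unfolding unif_weight_def d_def ..
  have dom: "v (m + int j) \<le> C ^ d * real d * ?u * v m" if "m \<in> Z" for m
  proof -
    have "m + int d \<in> unif_supp R" using that W unfolding unif_supp_def d_def by auto
    hence "unif_weight R (m + int d) * v (m + int d + int (j - d)) \<le> ?u"
      unfolding mass_def using unif_weight_nonneg vpos
      by (intro member_le_sum) (auto simp: less_imp_le unif_supp_def)
    moreover have "m + int d + int (j - d) = m + int j" using j unfolding d_def by simp
    ultimately have "v (m + int j) / (real d * v (m + int d)) \<le> ?u" by (simp add: w mult.commute)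
    moreover have "real d * v (m + int d) > 0" using vpos unfolding d_def by simp
    ultimately have "v (m + int j) \<le> ?u * (real d * v (m + int d))" by (simp add: pos_divide_le_eq)
    also have "\<dots> \<le> ?u * (real d * (C ^ d * v m))"
      using u0 v_shift_le[of m d] by (intro mult_left_mono) auto
    finally show ?thesis by (simp add: algebra_simps)
  qed
  have "mass a Z j \<le> (\<Sum>m\<in>Z. a m * (C ^ d * real d * ?u * v m))"
    unfolding mass_def[of a Z j] using a0 dom by (intro sum_mono mult_left_mono) auto
  also have "\<dots> = C ^ d * real d * ?u * mass a Z 0"
    unfolding mass_def[of a Z 0] sum_distrib_left by (intro sum.cong) (auto simp: algebra_simps)
  finally show ?thesis unfolding d_def .
qed

text \<open>If the part of a growth block outside the window \<open>[-R, R]\<close> is not often large, the part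
  inside is; delayed by \<open>2R + 1\<close>, it is dominated by the uniform block right of the window.\<close>
lemma unif_block_large_often:
  assumes blk: "large_often K (1 - \<theta>) a Z L"
    and outside: "real (card {j\<in>{1..L}. mass a (Z - {- int R..int R}) j \<ge> K/2}) < (1 - 2 * \<theta>) * real L"
    and long: "2 * real (2 * R + 1) \<le> \<theta> * real L"
    and K: "C ^ (2 * R + 1) * real (2 * R + 1) * k \<le> K/2"
  shows "large_often k (\<theta>/2) (unif_weight R) (unif_supp R) L"
proof -
  define d where "d = 2 * R + 1"
  define B where "B = C ^ d * real d"
  have Bpos: "B > 0" unfolding B_def d_def using C1 by simp
  have fin: "finite Z" and a0: "\<forall>m. a m \<ge> 0" and L1: "L \<ge> 1" and mass0: "mass a Z 0 \<le> 1"
    using blk unfolding large_often_def by auto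
  define Zo where "Zo = Z - {- int R..int R}"
  define Zi where "Zi = Z \<inter> {- int R..int R}"
  have split: "mass a Z j = mass a Zi j + mass a Zo j" for j
    unfolding mass_def Zi_def Zo_def using fin by (rule sum.Int_Diff)
  have Zi0: "mass a Zi 0 \<le> 1" using mass_subset_le[of Z Zi a 0] fin a0 mass0 unfolding Zi_def by auto
  have "real (card {i\<in>{1..L}. mass (unif_weight R) (unif_supp R) i \<ge> k}) \<ge> \<theta>/2 * real L"
  proof (rule card_upto_delayed_transfer[where g="mass a Zi" and h="mass a Zo" and K=K and d=d])
    show "real (card {j\<in>{1..L}. mass a Zi j + mass a Zo j \<ge> K}) \<ge> (1 - \<theta>) * real L"
      using blk unfolding large_often_def split by simp
    show "real (card {j\<in>{1..L}. mass a Zo j \<ge> K/2}) < (1 - 2 * \<theta>) * real L"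
      using outside unfolding Zo_def .
    show "2 * real d \<le> \<theta> * real L" using long unfolding d_def .
  next
    fix j assume dj: "d < j" and big: "mass a Zi j \<ge> K/2"
    let ?u = "mass (unif_weight R) (unif_supp R) (j - d)"
    have u0: "?u \<ge> 0" by (intro mass_nonneg unif_weight_nonneg)
    have "mass a Zi j \<le> B * ?u * mass a Zi 0"
      using mass_window_le_unif[of a Zi R j] a0 dj unfolding Zi_def B_def d_def by auto
    also have "\<dots> \<le> B * ?u" using Zi0 Bpos u0 by (simp add: mult_left_le)
    finally have "B * k \<le> B * ?u" using big K unfolding B_def d_def by linarith
    thus "?u \<ge> k" using Bpos by simp
  qed
  thus ?thesis using L1 mass_unif_0 unif_weight_nonneg unfolding large_often_def by (simp add: unif_supp_def)
qed

lemma growth_block_avoiding: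
  assumes growth: growth_on_positive_dens and ths: "\<theta>s > 0"
  shows "\<exists>a Z L. L \<ge> M \<and> Z \<inter> {- int R..int R} = {} \<and> large_often K (1 - \<theta>s) a Z L"
proof -
  define \<theta> where "\<theta> = min \<theta>s 1 / 2"
  have th: "\<theta> > 0" "2 * \<theta> \<le> \<theta>s" using ths unfolding \<theta>_def by auto
  define d where "d = 2 * R + 1"
  have "\<theta>/2 > 0" "2 * \<theta> > 0" using th by auto
  then obtain k1 where k1: "\<And>a Z N. large_often k1 (\<theta>/2) a Z N \<Longrightarrow>
      \<exists>s c L. L \<ge> M \<and> large_often K (1 - 2 * \<theta>) (\<lambda>m. c * a (m - int s)) ((+) (int s) ` Z) L"
    using growth_amplify[where M=M and K=K] by blast
  define K' where "K' = max (2 * K) (2 * (C ^ d * real d) * k1)"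
  define M' where "M' = max M (nat \<lceil>2 * real d / \<theta>\<rceil>)"
  obtain \<epsilon> where eps: "\<epsilon> > 0" and grows: "\<And>K M. \<exists>a Z N. N \<ge> M \<and> large_often K \<epsilon> a Z N"
    using growth unfolding growth_on_positive_dens_def by blast
  obtain k0 where k0: "\<And>a Z N. large_often k0 \<epsilon> a Z N \<Longrightarrow>
      \<exists>s c L. L \<ge> M' \<and> large_often K' (1 - \<theta>) (\<lambda>m. c * a (m - int s)) ((+) (int s) ` Z) L"
    using growth_amplify[OF eps th(1), where M=M' and K=K'] by blast
  obtain a Z L where L: "L \<ge> M'" and blk: "large_often K' (1 - \<theta>) a Z L"
    using grows[where K=k0 and M=0] k0 by blast
  define Zo where "Zo = Z - {- int R..int R}"
  show ?thesis
  proof (cases "real (card {j\<in>{1..L}. mass a Zo j \<ge> K'/2}) \<ge> (1 - 2 * \<theta>) * real L")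
    case True
    have "mass a Zo 0 \<le> 1"
      using blk mass_subset_le[of Z Zo a 0] unfolding large_often_def Zo_def by auto
    hence "large_often (K'/2) (1 - 2 * \<theta>) a Zo L"
      using True blk unfolding large_often_def Zo_def by auto
    hence "large_often K (1 - \<theta>s) a Zo L" by (rule large_often_mono) (use th in \<open>auto simp: K'_def\<close>)
    moreover have "Zo \<inter> {- int R..int R} = {}" "L \<ge> M" using L unfolding Zo_def M'_def by auto
    ultimately show ?thesis by blast
  next
    case False
    have "real L \<ge> 2 * real d / \<theta>" using L unfolding M'_def by linarith
    hence "2 * real (2 * R + 1) \<le> \<theta> * real L" using th(1) unfolding d_def by (simp add: divide_simps mult.commute)
    moreover have "C ^ (2 * R + 1) * real (2 * R + 1) * k1 \<le> K'/2" unfolding K'_def d_def by simp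
    ultimately have "large_often k1 (\<theta>/2) (unif_weight R) (unif_supp R) L"
      using unif_block_large_often[OF blk] False unfolding Zo_def by simp
    then obtain s c L2 where L2: "L2 \<ge> M" and blk2:
        "large_often K (1 - 2 * \<theta>) (\<lambda>m. c * unif_weight R (m - int s)) ((+) (int s) ` unif_supp R) L2"
      using k1 by blast
    have "large_often K (1 - \<theta>s) (\<lambda>m. c * unif_weight R (m - int s)) ((+) (int s) ` unif_supp R) L2"
      using large_often_mono[OF blk2, of K "1 - \<theta>s"] th(2) by simp
    moreover have "(+) (int s) ` unif_supp R \<inter> {- int R..int R} = {}" by (auto simp: unif_supp_def)
    ultimately show ?thesis using L2 by blast
  qed
qed


definition iter_pnorm :: "(int \<Rightarrow> real) \<Rightarrow> nat \<Rightarrow> real" where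
  "iter_pnorm x j = infsum (\<lambda>m. \<bar>x m\<bar> powr p * v (m + int j)) UNIV"

lemma p_pos: "p > 0" using p1 by simp

lemma pnorm_term_nonneg: "\<bar>x m\<bar> powr p * v (m + int j) \<ge> 0"
  using vpos by (simp add: less_imp_le)

lemma iter_pnorm_nonneg: "iter_pnorm x j \<ge> 0"
  unfolding iter_pnorm_def by (intro infsum_nonneg) (rule pnorm_term_nonneg)

lemma iter_pnorm_le:
  assumes "\<And>F. finite F \<Longrightarrow> (\<Sum>m\<in>F. \<bar>x m\<bar> powr p * v (m + int j)) \<le> B"
  shows "(\<lambda>m. \<bar>x m\<bar> powr p * v (m + int j)) summable_on UNIV" "iter_pnorm x j \<le> B"
proof -
  show sm: "(\<lambda>m. \<bar>x m\<bar> powr p * v (m + int j)) summable_on UNIV"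
    by (intro nonneg_bdd_above_summable_on pnorm_term_nonneg) (use assms in \<open>auto intro!: bdd_aboveI2\<close>)
  show "iter_pnorm x j \<le> B" unfolding iter_pnorm_def by (intro infsum_le_finite_sums[OF sm]) (use assms in auto)
qed

lemma sum_le_iter_pnorm:
  assumes "(\<lambda>m. \<bar>x m\<bar> powr p * v (m + int j)) summable_on UNIV" "finite F"
  shows "(\<Sum>m\<in>F. \<bar>x m\<bar> powr p * v (m + int j)) \<le> iter_pnorm x j"
  unfolding iter_pnorm_def using assms by (intro finite_sum_le_infsum) (auto intro: pnorm_term_nonneg)

lemma lpw_iter_summable:
  assumes "x \<in> lpw p v"
  shows "(\<lambda>m. \<bar>x m\<bar> powr p * v (m + int j)) summable_on UNIV"
proof -
  have s: "(\<lambda>n. \<bar>x n\<bar> powr p * v n) summable_on UNIV" using assms unfolding lpw_def by simp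
  have "(\<lambda>n. C ^ j * (\<bar>x n\<bar> powr p * v n)) summable_on UNIV"
    using summable_on_cmult_right[OF s] by simp
  thus ?thesis
  proof (rule summable_on_comparison_test)
    fix m :: int
    have "\<bar>x m\<bar> powr p * v (m + int j) \<le> \<bar>x m\<bar> powr p * (C ^ j * v m)"
      by (rule mult_left_mono[OF v_shift_le]) simp
    thus "\<bar>x m\<bar> powr p * v (m + int j) \<le> C ^ j * (\<bar>x m\<bar> powr p * v m)" by (simp add: algebra_simps)
    show "0 \<le> \<bar>x m\<bar> powr p * v (m + int j)" by (rule pnorm_term_nonneg)
  qed
qed

lemma funpow_fwd_shift: "(fwd_shift ^^ j) x = (\<lambda>n. x (n - int j))"
proof (induction j)
  case 0 then show ?case by simp
next
  case (Suc j)
  have "(fwd_shift ^^ Suc j) x = fwd_shift ((fwd_shift ^^ j) x)" by (simp only: funpow.simps comp_apply)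
  also have "\<dots> = (\<lambda>n. x (n - int (Suc j)))" unfolding Suc fwd_shift_def by (simp add: algebra_simps)
  finally show ?case .
qed

lemma lpw_dist_funpow:
  "lpw_dist p v ((fwd_shift ^^ j) x) ((fwd_shift ^^ j) y) = iter_pnorm (\<lambda>m. x m - y m) j powr (1/p)"
proof -
  have "infsum (\<lambda>n. \<bar>x (n - int j) - y (n - int j)\<bar> powr p * v n) UNIV
      = infsum (\<lambda>m. (\<lambda>n. \<bar>x (n - int j) - y (n - int j)\<bar> powr p * v n) (m + int j)) UNIV"
    by (rule infsum_reindex_bij_betw[symmetric]) (auto simp: bij_betw_def inj_on_def image_def intro!: exI[of _ "_ - int j"])
  also have "\<dots> = iter_pnorm (\<lambda>m. x m - y m) j" unfolding iter_pnorm_def by simp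
  finally show ?thesis unfolding lpw_dist_def lpw_norm_def funpow_fwd_shift by simp
qed

lemma lpw_dist_eq: "lpw_dist p v x y = iter_pnorm (\<lambda>m. x m - y m) 0 powr (1/p)"
  using lpw_dist_funpow[of 0 x y] by simp

lemma iter_pnorm_root_less_iff:
  assumes d: "\<delta> > 0"
  shows "iter_pnorm x j powr (1/p) < \<delta> \<longleftrightarrow> iter_pnorm x j < \<delta> powr p"
proof
  assume "iter_pnorm x j < \<delta> powr p"
  hence "iter_pnorm x j powr (1/p) < (\<delta> powr p) powr (1/p)"
    using iter_pnorm_nonneg p_pos by (intro powr_less_mono2) auto
  thus "iter_pnorm x j powr (1/p) < \<delta>" using d p_pos by (simp add: powr_powr)
next
  assume lt: "iter_pnorm x j powr (1/p) < \<delta>"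
  show "iter_pnorm x j < \<delta> powr p"
  proof (rule ccontr)
    assume "\<not> iter_pnorm x j < \<delta> powr p"
    hence "(\<delta> powr p) powr (1/p) \<le> iter_pnorm x j powr (1/p)" using d p_pos by (intro powr_mono2) auto
    with lt d p_pos show False by (simp add: powr_powr)
  qed
qed

lemma scrambled_pair_iff:
  assumes "\<epsilon> > 0" "\<delta> > 0"
  shows "(lower_dens {j. lpw_dist p v ((fwd_shift ^^ j) x) ((fwd_shift ^^ j) y) < \<epsilon>} = 0 \<and>
          upper_dens {j. lpw_dist p v ((fwd_shift ^^ j) x) ((fwd_shift ^^ j) y) < \<delta>} = 1) \<longleftrightarrow>
         (null_lower_dens {j. iter_pnorm (\<lambda>m. x m - y m) j < \<epsilon> powr p} \<and>
          full_upper_dens {j. iter_pnorm (\<lambda>m. x m - y m) j < \<delta> powr p})"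
  unfolding lpw_dist_funpow iter_pnorm_root_less_iff[OF assms(1)] iter_pnorm_root_less_iff[OF assms(2)]
  by (simp add: lower_dens_eq_0_iff upper_dens_eq_1_iff)

lemma powr_le_three_terms: fixes a b c u :: real
  assumes "u \<le> \<bar>a\<bar> + \<bar>b\<bar> + \<bar>c\<bar>" "u \<ge> 0"
  shows "u powr p \<le> 3 powr p * (\<bar>a\<bar> powr p + \<bar>b\<bar> powr p + \<bar>c\<bar> powr p)"
proof -
  define mx where "mx = max \<bar>a\<bar> (max \<bar>b\<bar> \<bar>c\<bar>)"
  have "u \<le> 3 * mx" using assms(1) unfolding mx_def by linarith
  hence "u powr p \<le> (3 * mx) powr p" using assms(2) p_pos by (intro powr_mono2) auto
  also have "\<dots> = 3 powr p * mx powr p" unfolding mx_def by (simp add: powr_mult)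
  also have "mx powr p \<le> \<bar>a\<bar> powr p + \<bar>b\<bar> powr p + \<bar>c\<bar> powr p"
    unfolding mx_def by (auto simp: max_def)
  finally show ?thesis by simp
qed

lemma rat_approx_term:
  assumes e: "\<epsilon> > 0"
  shows "\<exists>r::rat. \<bar>x - real_of_rat r\<bar> powr p * v m \<le> \<epsilon>"
proof -
  define \<zeta> where "\<zeta> = (\<epsilon> / v m) powr (1/p)"
  have z: "\<zeta> > 0" unfolding \<zeta>_def using e vpos[of m] by simp
  obtain r :: rat where r: "x - \<zeta> < of_rat r" "of_rat r < x + \<zeta>"
    using of_rat_dense[of "x - \<zeta>" "x + \<zeta>"] z by auto
  have "\<bar>x - of_rat r\<bar> < \<zeta>" using r by auto
  hence "\<bar>x - of_rat r\<bar> powr p \<le> \<zeta> powr p" using p_pos by (intro powr_mono2) auto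
  also have "\<zeta> powr p = \<epsilon> / v m" unfolding \<zeta>_def using e vpos[of m] p_pos by (simp add: powr_powr)
  finally have "\<bar>x - of_rat r\<bar> powr p * v m \<le> \<epsilon> / v m * v m" using vpos[of m] by (intro mult_right_mono) auto
  thus ?thesis using vpos[of m] by (intro exI[of _ r]) simp
qed

lemma list_seq_approx:
  assumes x: "x \<in> lpw p v" and e: "\<eta> > 0"
  shows "\<exists>l. \<forall>F. finite F \<longrightarrow> (\<Sum>m\<in>F. \<bar>x m - list_seq l m\<bar> powr p * v m) \<le> \<eta>"
proof -
  define f where "f m = \<bar>x m\<bar> powr p * v m" for m
  have sf: "f summable_on UNIV" using x unfolding lpw_def f_def by simp
  have f0: "f m \<ge> 0" for m unfolding f_def using vpos by (simp add: less_imp_le)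
  define S where "S = infsum f UNIV"
  have Ssup: "S = (SUP F\<in>{F. finite F \<and> F \<subseteq> UNIV}. sum f F)"
    unfolding S_def using sf f0 by (intro infsum_nonneg_is_SUPREMUM_real) auto
  have bdd: "bdd_above (sum f ` {F. finite F \<and> F \<subseteq> UNIV})"
    using sf f0 unfolding S_def by (intro bdd_aboveI2[of _ _ "infsum f UNIV"] finite_sum_le_infsum) auto
  have "S - \<eta>/2 < S" using e by simp
  then obtain F0 where F0: "finite F0" "sum f F0 > S - \<eta>/2"
    unfolding Ssup using less_cSUP_iff[OF _ bdd] by (metis (no_types, lifting) empty_iff finite.emptyI mem_Collect_eq subset_UNIV)
  have tail: "sum f G \<le> \<eta>/2" if "finite G" "G \<inter> F0 = {}" for G
  proof -
    have "sum f (F0 \<union> G) \<le> S" unfolding S_def using sf f0 that F0 by (intro finite_sum_le_infsum) auto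
    moreover have "sum f (F0 \<union> G) = sum f F0 + sum f G" using that F0 by (intro sum.union_disjoint) auto
    ultimately show ?thesis using F0 by linarith
  qed
  define \<epsilon>' where "\<epsilon>' = \<eta> / (2 * (real (card F0) + 1))"
  have e': "\<epsilon>' > 0" unfolding \<epsilon>'_def using e by simp
  define rr where "rr m = (SOME r::rat. \<bar>x m - real_of_rat r\<bar> powr p * v m \<le> \<epsilon>')" for m
  have rr: "\<bar>x m - real_of_rat (rr m)\<bar> powr p * v m \<le> \<epsilon>'" for m
    unfolding rr_def using rat_approx_term[OF e', of "x m" m] by (rule someI_ex)
  define l where "l = map (\<lambda>m. (m, rr m)) (sorted_list_of_set F0)"
  have enum_list: "list_seq l m = (if m \<in> F0 then real_of_rat (rr m) else 0)" for m
    unfolding list_seq_def l_def map_of_map_restrict using F0(1) by (auto simp: restrict_map_def)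
  show ?thesis
  proof (intro exI[of _ l] allI impI)
    fix F :: "int set" assume fF: "finite F"
    let ?g = "\<lambda>m. \<bar>x m - list_seq l m\<bar> powr p * v m"
    have "sum ?g F = sum ?g (F \<inter> F0) + sum ?g (F - F0)" using fF by (rule sum.Int_Diff)
    also have "sum ?g (F \<inter> F0) \<le> sum (\<lambda>_. \<epsilon>') (F \<inter> F0)"
      by (intro sum_mono) (use rr enum_list in auto)
    also have "\<dots> = real (card (F \<inter> F0)) * \<epsilon>'" by simp
    also have "\<dots> \<le> real (card F0) * \<epsilon>'" using e' F0(1) by (intro mult_right_mono) (auto intro: card_mono)
    also have "\<dots> \<le> \<eta>/2"
    proof -
      have "real (card F0) * \<epsilon>' = \<eta>/2 * (real (card F0) / (real (card F0) + 1))" unfolding \<epsilon>'_def by simp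
      also have "\<dots> \<le> \<eta>/2 * 1" using e by (intro mult_left_mono) auto
      finally show ?thesis by simp
    qed
    also have "sum ?g (F - F0) = sum f (F - F0)" unfolding f_def using enum_list by (intro sum.cong) auto
    also have "\<dots> \<le> \<eta>/2" using fF by (intro tail) auto
    finally show "sum ?g F \<le> \<eta>" by simp
  qed
qed

lemma sum_le_support_sum:
  assumes "\<And>m. d m \<noteq> 0 \<Longrightarrow> nat \<bar>m\<bar> \<le> Kd" "finite F"
  shows "(\<Sum>m\<in>F. \<bar>d m\<bar> powr p * v (m + int j)) \<le> (\<Sum>m\<in>{- int Kd..int Kd}. \<bar>d m\<bar> powr p * v (m + int j))"
proof -
  have "(\<Sum>m\<in>F. \<bar>d m\<bar> powr p * v (m + int j)) = (\<Sum>m\<in>F \<inter> {- int Kd..int Kd}. \<bar>d m\<bar> powr p * v (m + int j))"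
  proof (rule sum.mono_neutral_right)
    show "\<forall>i\<in>F - F \<inter> {- int Kd..int Kd}. \<bar>d i\<bar> powr p * v (i + int j) = 0"
    proof
      fix i assume "i \<in> F - F \<inter> {- int Kd..int Kd}"
      hence "\<not> nat \<bar>i\<bar> \<le> Kd" by auto
      hence "d i = 0" using assms(1) by blast
      thus "\<bar>d i\<bar> powr p * v (i + int j) = 0" by simp
    qed
  qed (use assms(2) in auto)
  also have "\<dots> \<le> (\<Sum>m\<in>{- int Kd..int Kd}. \<bar>d m\<bar> powr p * v (m + int j))"
    by (intro sum_mono2) (auto intro: pnorm_term_nonneg)
  finally show ?thesis .
qed

end

lemma weighted_shift_if_bounded_ratio:
  assumes p: "1 \<le> p" and vpos: "\<And>n. v n > 0" and vbdd: "bdd_above (range (\<lambda>n. v (n + 1) / v n))"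
  obtains C where "weighted_shift p v C"
proof -
  obtain S0 where S0: "\<And>n. v (n + 1) / v n \<le> S0" using vbdd unfolding bdd_above_def by auto
  have "weighted_shift p v (max 1 S0)"
  proof
    fix n
    have "v (n + 1) / v n \<le> max 1 S0" using S0[of n] by simp
    thus "v (n + 1) \<le> max 1 S0 * v n" using vpos[of n] by (simp add: divide_simps)
  qed (use p vpos in auto)
  thus ?thesis by (rule that)
qed

section \<open>A dense scrambled set from the criterion\<close>

locale weighted_shift_criterion = weighted_shift +
  assumes growth: growth_on_positive_dens
    and vanish: weights_vanish_densely
begin

text \<open>A block for stage \<open>b\<close> is a triple (weights, support, length \<open>L\<close>): supported outside
  \<open>[-R, R]\<close>, of mass at most \<open>2^-b\<close> up to time \<open>Mt < L\<close>, and of mass at least 1 on a proportion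
  \<open>1 - 1/(b+1)\<close> of \<open>[1, L]\<close>.\<close>
definition good_block :: "nat \<Rightarrow> nat \<Rightarrow> nat \<Rightarrow> (int \<Rightarrow> real) \<times> int set \<times> nat \<Rightarrow> bool" where
  "good_block b R Mt x \<longleftrightarrow> finite (fst (snd x)) \<and> (\<forall>m. fst x m \<ge> 0) \<and> fst (snd x) \<inter> {- int R..int R} = {} \<and>
     (\<forall>j\<le>Mt. mass (fst x) (fst (snd x)) j \<le> (1/2)^b) \<and> snd (snd x) \<ge> Mt + b + 1 \<and>
     real (card {j\<in>{1..snd (snd x)}. mass (fst x) (fst (snd x)) j \<ge> 1}) \<ge> (1 - 1/(real b + 1)) * real (snd (snd x))"

lemma good_block_exists: "\<exists>x. good_block b R Mt x"
proof -
  define Ks where "Ks = 2 ^ b * C ^ Mt"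
  have Kpos: "Ks > 0" unfolding Ks_def using C1 by simp
  obtain a Z L where "L \<ge> Mt + b + 1" "Z \<inter> {- int R..int R} = {}"
      "large_often Ks (1 - 1/(real b + 1)) a Z L"
    using growth_block_avoiding[OF growth, of "1/(real b + 1)", where M="Mt + b + 1" and R=R and K=Ks] by auto
  hence aZL: "finite Z" "\<forall>m. a m \<ge> 0" "Z \<inter> {- int R..int R} = {}" "mass a Z 0 \<le> 1" "L \<ge> Mt + b + 1"
     "real (card {j\<in>{1..L}. mass a Z j \<ge> Ks}) \<ge> (1 - 1/(real b + 1)) * real L"
    unfolding large_often_def by auto
  define a' where "a' = (\<lambda>m. (1/Ks) * a m)"
  have Oa': "mass a' Z j = (1/Ks) * mass a Z j" for j unfolding a'_def by (rule mass_cmult)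
  have "good_block b R Mt (a', Z, L)"
    unfolding good_block_def fst_conv snd_conv
  proof (intro conjI allI impI)
    show "finite Z" "Z \<inter> {- int R..int R} = {}" "L \<ge> Mt + b + 1" using aZL by auto
    fix m show "a' m \<ge> 0" unfolding a'_def using aZL(2) Kpos by simp
  next
    fix j assume "j \<le> Mt"
    have "mass a Z j \<le> C ^ j * mass a Z 0" using aZL(2) by (intro mass_le_power) auto
    also have "\<dots> \<le> C ^ Mt * 1" using aZL(4) C1 \<open>j \<le> Mt\<close>
      by (intro mult_mono power_increasing) (auto simp: mass_nonneg aZL(2))
    finally have "mass a Z j \<le> C ^ Mt" by simp
    hence "(1/Ks) * mass a Z j \<le> (1/Ks) * C ^ Mt" using Kpos by (intro mult_left_mono) auto
    also have "(1/Ks) * C ^ Mt = (1/2)^b" unfolding Ks_def using C1 by (simp add: power_one_over)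
    finally show "mass a' Z j \<le> (1/2)^b" using Oa' by simp
  next
    have "card {j\<in>{1..L}. mass a Z j \<ge> Ks} \<le> card {j\<in>{1..L}. mass a' Z j \<ge> 1}"
    proof (rule card_upto_mono)
      fix j assume "mass a Z j \<ge> Ks"
      hence "(1/Ks) * mass a Z j \<ge> (1/Ks) * Ks" using Kpos by (intro mult_left_mono) auto
      thus "mass a' Z j \<ge> 1" using Oa' Kpos by simp
    qed
    thus "real (card {j\<in>{1..L}. mass a' Z j \<ge> 1}) \<ge> (1 - 1/(real b + 1)) * real L" using aZL(6) by linarith
  qed
  thus ?thesis by blast
qed

definition choose_block :: "nat \<Rightarrow> nat \<Rightarrow> nat \<Rightarrow> (int \<Rightarrow> real) \<times> int set \<times> nat" where
  "choose_block b R Mt = (SOME x. good_block b R Mt x)"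

lemma choose_block: "good_block b R Mt (choose_block b R Mt)"
  unfolding choose_block_def using good_block_exists by (rule someI_ex)


definition good_horizon :: "nat \<Rightarrow> nat \<Rightarrow> real \<Rightarrow> nat \<Rightarrow> nat \<Rightarrow> bool" where
  "good_horizon b R \<delta> M0 N \<longleftrightarrow> N \<ge> M0 \<and> real (card (quiet_window R \<delta> \<inter> {1..N})) \<ge> (1 - 1/(real b + 1)) * real N"

definition choose_horizon :: "nat \<Rightarrow> nat \<Rightarrow> real \<Rightarrow> nat \<Rightarrow> nat" where
  "choose_horizon b R \<delta> M0 = (SOME N. good_horizon b R \<delta> M0 N)"

lemma choose_horizon:
  "\<delta> > 0 \<Longrightarrow> good_horizon b R \<delta> M0 (choose_horizon b R \<delta> M0)"
proof -
  assume d: "\<delta> > 0"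
  have "full_upper_dens (quiet_window R \<delta>)" using vanish d unfolding weights_vanish_densely_def by blast
  moreover have "1/(real b + 1) > 0" by simp
  ultimately obtain N where "N \<ge> M0" "real (card (quiet_window R \<delta> \<inter> {1..N})) \<ge> (1 - 1/(real b + 1)) * real N"
    unfolding full_upper_dens_def by blast
  hence "\<exists>N. good_horizon b R \<delta> M0 N" unfolding good_horizon_def by blast
  thus ?thesis unfolding choose_horizon_def by (rule someI_ex)
qed

text \<open>Block \<open>b\<close> is chosen beyond \<open>radius b\<close> (hence
  beyond all earlier blocks) and negligible up to \<open>horizon b\<close>; then \<open>horizon (b+1)\<close> is chosen so
  large that most times up to it are quiet for the window \<open>radius (b+1)\<close>, which contains blocks
  \<open>0..b\<close>, at a threshold making these blocks negligible.\<close>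
primrec stage :: "nat \<Rightarrow> nat \<times> nat \<times> real" where
  "stage 0 = (0, 0, 0)"
| "stage (Suc b) = (let R = fst (stage b); Mt = fst (snd (stage b)); TM = snd (snd (stage b));
      B = choose_block b (R + b + enum_radius b) Mt;
      Rn = R + b + enum_radius b + abs_bound (fst (snd B)); TMn = TM + sum (fst B) (fst (snd B))
    in (Rn, choose_horizon b Rn ((1/2)^b / (1 + TMn)) ((b+1) * (Mt + snd (snd B) + 1)), TMn))"

definition radius :: "nat \<Rightarrow> nat" where
  "radius b = fst (stage b)"
definition horizon :: "nat \<Rightarrow> nat" where
  "horizon b = fst (snd (stage b))"
definition total_weight :: "nat \<Rightarrow> real" where
  "total_weight b = snd (snd (stage b))"
definition block :: "nat \<Rightarrow> (int \<Rightarrow> real) \<times> int set \<times> nat" where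
  "block b = choose_block b (radius b + b + enum_radius b) (horizon b)"
definition blk_weight :: "nat \<Rightarrow> int \<Rightarrow> real" where
  "blk_weight b = fst (block b)"
definition blk_supp :: "nat \<Rightarrow> int set" where
  "blk_supp b = fst (snd (block b))"
definition blk_len :: "nat \<Rightarrow> nat" where
  "blk_len b = snd (snd (block b))"
definition blk_thresh :: "nat \<Rightarrow> real" where
  "blk_thresh b = (1/2)^b / (1 + total_weight (Suc b))"

lemma radius_Suc: "radius (Suc b) = radius b + b + enum_radius b + abs_bound (blk_supp b)"
  unfolding radius_def blk_supp_def block_def horizon_def by (simp add: Let_def radius_def)
lemma total_weight_Suc: "total_weight (Suc b) = total_weight b + sum (blk_weight b) (blk_supp b)"
  unfolding total_weight_def blk_weight_def blk_supp_def block_def horizon_def radius_def by (simp add: Let_def)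
lemma horizon_Suc:
  "horizon (Suc b) = choose_horizon b (radius (Suc b)) (blk_thresh b) ((b+1) * (horizon b + blk_len b + 1))"
  unfolding blk_thresh_def total_weight_Suc radius_Suc unfolding horizon_def blk_len_def block_def blk_supp_def blk_weight_def total_weight_def radius_def by (simp add: Let_def)
lemma total_weight_0: "total_weight 0 = 0"
  unfolding total_weight_def by simp

lemma block_good:
  "good_block b (radius b + b + enum_radius b) (horizon b) (blk_weight b, blk_supp b, blk_len b)"
  using choose_block[of b "radius b + b + enum_radius b" "horizon b"] unfolding blk_weight_def blk_supp_def blk_len_def block_def by simp

lemma blk_supp_finite: "finite (blk_supp b)" using block_good[of b] unfolding good_block_def by simp
lemma blk_weight_nonneg: "blk_weight b m \<ge> 0"
  using block_good[of b] unfolding good_block_def by simp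
lemma blk_supp_avoids: "m \<in> blk_supp b \<Longrightarrow> nat \<bar>m\<bar> > radius b + b + enum_radius b"
  using block_good[of b] unfolding good_block_def by (auto simp: disjoint_iff)
lemma mass_block_early: "j \<le> horizon b \<Longrightarrow> mass (blk_weight b) (blk_supp b) j \<le> (1/2)^b"
  using block_good[of b] unfolding good_block_def by simp
lemma mass_block_0: "mass (blk_weight b) (blk_supp b) 0 \<le> (1/2)^b"
  using mass_block_early[of 0 b] by simp
lemma blk_len_ge: "blk_len b \<ge> horizon b + b + 1"
  using block_good[of b] unfolding good_block_def by simp
lemma blk_len_count:
  "real (card {j\<in>{1..blk_len b}. mass (blk_weight b) (blk_supp b) j \<ge> 1}) \<ge> (1 - 1/(real b + 1)) * real (blk_len b)"
  using block_good[of b] unfolding good_block_def by simp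

lemma total_weight_nonneg: "total_weight b \<ge> 0"
proof (induction b)
  case 0 then show ?case by (simp add: total_weight_0)
next
  case (Suc b) then show ?case unfolding total_weight_Suc using blk_weight_nonneg by (simp add: sum_nonneg)
qed

lemma total_weight_eq_sum: "total_weight b = (\<Sum>c<b. sum (blk_weight c) (blk_supp c))"
  by (induction b) (simp_all add: total_weight_0 total_weight_Suc)

lemma blk_thresh_pos: "blk_thresh b > 0"
  unfolding blk_thresh_def using total_weight_nonneg[of "Suc b"] by simp

lemma horizon_good:
  "good_horizon b (radius (Suc b)) (blk_thresh b) ((b+1) * (horizon b + blk_len b + 1)) (horizon (Suc b))"
  unfolding horizon_Suc by (rule choose_horizon[OF blk_thresh_pos])

lemma horizon_Suc_ge: "horizon (Suc b) \<ge> (b+1) * (horizon b + blk_len b + 1)"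
  using horizon_good[of b] unfolding good_horizon_def by simp
lemma horizon_count:
  "real (card (quiet_window (radius (Suc b)) (blk_thresh b) \<inter> {1..horizon (Suc b)})) \<ge> (1 - 1/(real b + 1)) * real (horizon (Suc b))"
  using horizon_good[of b] unfolding good_horizon_def by simp

lemma horizon_le_Suc: "horizon b \<le> horizon (Suc b)"
proof -
  have "horizon b \<le> horizon b + blk_len b + 1" by simp
  also have "\<dots> \<le> (b+1) * (horizon b + blk_len b + 1)" by simp
  also have "\<dots> \<le> horizon (Suc b)" by (rule horizon_Suc_ge)
  finally show ?thesis .
qed
lemma horizon_mono: "b \<le> b' \<Longrightarrow> horizon b \<le> horizon b'"
  by (induction b' rule: dec_induct) (auto intro: order_trans horizon_le_Suc)
lemma radius_le_Suc: "radius b \<le> radius (Suc b)" unfolding radius_Suc by simp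
lemma radius_mono: "b \<le> b' \<Longrightarrow> radius b \<le> radius b'"
  by (induction b' rule: dec_induct) (auto intro: order_trans radius_le_Suc)

lemma blk_supp_bound: "m \<in> blk_supp c \<Longrightarrow> nat \<bar>m\<bar> \<le> radius (Suc c)"
proof -
  assume "m \<in> blk_supp c"
  hence "nat \<bar>m\<bar> \<le> abs_bound (blk_supp c)" using blk_supp_finite by (intro abs_bound_ge)
  thus ?thesis unfolding radius_Suc by simp
qed

lemma blk_supp_disjoint: "c \<noteq> b \<Longrightarrow> blk_supp c \<inter> blk_supp b = {}"
proof -
  { fix c b m assume "c < b" "m \<in> blk_supp c" "m \<in> blk_supp b"
    hence "nat \<bar>m\<bar> \<le> radius (Suc c)" by (intro blk_supp_bound)
    also have "\<dots> \<le> radius b" using \<open>c < b\<close> by (intro radius_mono) simp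
    finally have False using blk_supp_avoids[OF \<open>m \<in> blk_supp b\<close>] by simp }
  thus "c \<noteq> b \<Longrightarrow> blk_supp c \<inter> blk_supp b = {}" by (metis disjoint_iff linorder_neqE_nat)
qed

lemma blk_supp_gt: "m \<in> blk_supp b \<Longrightarrow> nat \<bar>m\<bar> > b"
  using blk_supp_avoids by fastforce
lemma enum_seq_on_blk_supp:
  "m \<in> blk_supp b \<Longrightarrow> q \<le> b \<Longrightarrow> enum_seq q m = 0"
  using blk_supp_avoids enum_seq_support by fastforce

lemma mass_block_le_power: "mass (blk_weight c) (blk_supp c) j \<le> C ^ j * (1/2)^c"
proof -
  have "mass (blk_weight c) (blk_supp c) j \<le> C ^ j * mass (blk_weight c) (blk_supp c) 0" by (intro mass_le_power blk_weight_nonneg)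
  also have "\<dots> \<le> C ^ j * (1/2)^c" using C1 mass_block_0 by (intro mult_left_mono) auto
  finally show ?thesis .
qed

lemma mass_block_nonneg: "mass (blk_weight c) (blk_supp c) j \<ge> 0"
  by (intro mass_nonneg blk_weight_nonneg)

text \<open>Block supports are pairwise disjoint, so this is the sum of the weights of the blocks in \<open>I\<close>.\<close>
definition union_weight :: "(nat \<Rightarrow> bool) \<Rightarrow> int \<Rightarrow> real" where
  "union_weight I m = (if \<exists>b. I b \<and> m \<in> blk_supp b then blk_weight (SOME b. m \<in> blk_supp b) m else 0)"

lemma some_blk_supp: "m \<in> blk_supp b \<Longrightarrow> (SOME b. m \<in> blk_supp b) = b"
proof -
  assume h: "m \<in> blk_supp b"
  hence "m \<in> blk_supp (SOME b. m \<in> blk_supp b)" by (rule someI)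
  thus ?thesis using h blk_supp_disjoint[of "SOME b. m \<in> blk_supp b" b] by auto
qed

lemma union_weight_nonneg: "union_weight I m \<ge> 0"
  unfolding union_weight_def using blk_weight_nonneg by simp

lemma union_weight_on_blk_supp:
  "m \<in> blk_supp b \<Longrightarrow> union_weight I m = (if I b then blk_weight b m else 0)"
proof -
  assume h: "m \<in> blk_supp b"
  have u: "c = b" if "m \<in> blk_supp c" for c using h that blk_supp_disjoint[of c b] by auto
  show ?thesis
  proof (cases "I b")
    case True
    thus ?thesis unfolding union_weight_def using h some_blk_supp[OF h] by auto
  next
    case False
    hence "\<not> (\<exists>c. I c \<and> m \<in> blk_supp c)" using u by auto
    thus ?thesis unfolding union_weight_def using False by auto
  qed
qed

lemma union_weight_empty: "union_weight (\<lambda>_. False) m = 0"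
  unfolding union_weight_def by simp

lemma sum_union_weight_le:
  assumes fF: "finite F" and Fb: "\<And>m. m \<in> F \<Longrightarrow> nat \<bar>m\<bar> \<le> K"
  shows "(\<Sum>m\<in>F. union_weight I m * v (m + int j)) \<le> (\<Sum>c\<in>{c. c < K \<and> I c}. mass (blk_weight c) (blk_supp c) j)"
proof -
  let ?CK = "{c. c < K \<and> I c}"
  have fCK: "finite ?CK" by simp
  have pt: "union_weight I m * v (m + int j) = (\<Sum>c\<in>?CK. if m \<in> blk_supp c then blk_weight c m * v (m + int j) else 0)" if "m \<in> F" for m
  proof (cases "\<exists>b. I b \<and> m \<in> blk_supp b")
    case True
    then obtain b where b: "I b" "m \<in> blk_supp b" by blast
    have "b < K" using blk_supp_gt[OF b(2)] Fb[OF that] by simp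
    have "(\<Sum>c\<in>?CK. if m \<in> blk_supp c then blk_weight c m * v (m + int j) else 0) = (\<Sum>c\<in>?CK. if c = b then blk_weight b m * v (m + int j) else 0)"
    proof (intro sum.cong refl)
      fix c assume "c \<in> ?CK"
      show "(if m \<in> blk_supp c then blk_weight c m * v (m + int j) else 0) = (if c = b then blk_weight b m * v (m + int j) else 0)"
        using b(2) blk_supp_disjoint[of c b] by auto
    qed
    also have "\<dots> = blk_weight b m * v (m + int j)" using b(1) \<open>b < K\<close> fCK by simp
    finally show ?thesis using union_weight_on_blk_supp[OF b(2)] b(1) by simp
  next
    case False
    hence "union_weight I m = 0" unfolding union_weight_def by auto
    moreover have "(\<Sum>c\<in>?CK. if m \<in> blk_supp c then blk_weight c m * v (m + int j) else 0) = 0"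
      using False by (intro sum.neutral) auto
    ultimately show ?thesis by simp
  qed
  have "(\<Sum>m\<in>F. union_weight I m * v (m + int j)) = (\<Sum>m\<in>F. \<Sum>c\<in>?CK. if m \<in> blk_supp c then blk_weight c m * v (m + int j) else 0)"
    using pt by (rule sum.cong[OF refl])
  also have "\<dots> = (\<Sum>c\<in>?CK. \<Sum>m\<in>F. if m \<in> blk_supp c then blk_weight c m * v (m + int j) else 0)" by (rule sum.swap)
  also have "\<dots> = (\<Sum>c\<in>?CK. \<Sum>m\<in>F \<inter> blk_supp c. blk_weight c m * v (m + int j))"
    by (simp add: sum.inter_restrict[OF fF])
  also have "\<dots> \<le> (\<Sum>c\<in>?CK. mass (blk_weight c) (blk_supp c) j)"
    unfolding mass_def using blk_supp_finite blk_weight_nonneg vpos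
    by (intro sum_mono sum_mono2) (auto simp: less_imp_le)
  finally show ?thesis .
qed

lemma sum_mass_blocks_le_power:
  "(\<Sum>c\<in>{c. c < K \<and> I c}. mass (blk_weight c) (blk_supp c) j) \<le> 2 * C ^ j"
proof -
  have "(\<Sum>c\<in>{c. c < K \<and> I c}. mass (blk_weight c) (blk_supp c) j) \<le> (\<Sum>c\<in>{c. c < K \<and> 0 \<le> c}. mass (blk_weight c) (blk_supp c) j)"
    using mass_block_nonneg by (intro sum_mono2) auto
  also have "\<dots> \<le> (\<Sum>c\<in>{c. c < K \<and> 0 \<le> c}. C ^ j * (1/2)^c)" by (intro sum_mono mass_block_le_power)
  also have "\<dots> = C ^ j * (\<Sum>c\<in>{c. c < K \<and> 0 \<le> c}. (1/2::real)^c)" by (simp add: sum_distrib_left)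
  also have "\<dots> \<le> C ^ j * (2 * (1/2)^0)" using C1 by (intro mult_left_mono half_power_tail_le) auto
  finally show ?thesis by simp
qed

lemma sum_mass_blocks_tail:
  "(\<And>c. I c \<Longrightarrow> q \<le> c) \<Longrightarrow> (\<Sum>c\<in>{c. c < K \<and> I c}. mass (blk_weight c) (blk_supp c) 0) \<le> 2 * (1/2)^q"
proof -
  assume h: "\<And>c. I c \<Longrightarrow> q \<le> c"
  have "(\<Sum>c\<in>{c. c < K \<and> I c}. mass (blk_weight c) (blk_supp c) 0) \<le> (\<Sum>c\<in>{c. c < K \<and> q \<le> c}. mass (blk_weight c) (blk_supp c) 0)"
    using mass_block_nonneg h by (intro sum_mono2) auto
  also have "\<dots> \<le> (\<Sum>c\<in>{c. c < K \<and> q \<le> c}. (1/2::real)^c)" by (intro sum_mono mass_block_0)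
  also have "\<dots> \<le> 2 * (1/2)^q" by (rule half_power_tail_le)
  finally show ?thesis .
qed

lemma sum_mass_blocks_stage:
  assumes j1: "horizon b < j" and j2: "j \<le> horizon (Suc b)" and jG: "j \<in> quiet_window (radius (Suc b)) (blk_thresh b)"
  shows "(\<Sum>c\<in>{c. c < K \<and> I c}. mass (blk_weight c) (blk_supp c) j) \<le> 2 * (1/2)^b"
proof -
  let ?S = "{c. c < K \<and> I c}"
  have split: "(\<Sum>c\<in>?S. mass (blk_weight c) (blk_supp c) j) = (\<Sum>c\<in>?S \<inter> {..b}. mass (blk_weight c) (blk_supp c) j) + (\<Sum>c\<in>?S - {..b}. mass (blk_weight c) (blk_supp c) j)"
    by (rule sum.Int_Diff) simp
  have early: "mass (blk_weight c) (blk_supp c) j \<le> blk_thresh b * sum (blk_weight c) (blk_supp c)" if "c \<le> b" for c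
  proof -
    have "mass (blk_weight c) (blk_supp c) j \<le> (\<Sum>m\<in>blk_supp c. blk_weight c m * blk_thresh b)"
      unfolding mass_def
    proof (intro sum_mono mult_left_mono)
      fix m assume m: "m \<in> blk_supp c"
      have "nat \<bar>m\<bar> \<le> radius (Suc c)" by (rule blk_supp_bound[OF m])
      also have "\<dots> \<le> radius (Suc b)" using that by (intro radius_mono) simp
      finally have "\<bar>m\<bar> \<le> int (radius (Suc b))" by simp
      thus "v (m + int j) \<le> blk_thresh b" using jG unfolding quiet_window_def by (auto intro: less_imp_le)
    qed (rule blk_weight_nonneg)
    also have "\<dots> = blk_thresh b * sum (blk_weight c) (blk_supp c)" by (simp add: sum_distrib_left mult.commute)
    finally show ?thesis .
  qed
  have "(\<Sum>c\<in>?S \<inter> {..b}. mass (blk_weight c) (blk_supp c) j) \<le> (\<Sum>c\<in>{..b}. mass (blk_weight c) (blk_supp c) j)"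
    using mass_block_nonneg by (intro sum_mono2) auto
  also have "\<dots> \<le> (\<Sum>c\<in>{..b}. blk_thresh b * sum (blk_weight c) (blk_supp c))" using early by (intro sum_mono) auto
  also have "\<dots> = blk_thresh b * total_weight (Suc b)" unfolding total_weight_eq_sum by (simp add: sum_distrib_left lessThan_Suc_atMost)
  also have "\<dots> \<le> (1/2)^b"
  proof -
    have t: "total_weight (Suc b) \<ge> 0" by (rule total_weight_nonneg)
    have "blk_thresh b * total_weight (Suc b) = (1/2)^b * (total_weight (Suc b) / (1 + total_weight (Suc b)))" unfolding blk_thresh_def by simp
    also have "total_weight (Suc b) / (1 + total_weight (Suc b)) \<le> 1" using t by simp
    hence "(1/2::real)^b * (total_weight (Suc b) / (1 + total_weight (Suc b))) \<le> (1/2)^b * 1" by (intro mult_left_mono) auto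
    finally show ?thesis by simp
  qed
  finally have A: "(\<Sum>c\<in>?S \<inter> {..b}. mass (blk_weight c) (blk_supp c) j) \<le> (1/2)^b" .
  have "(\<Sum>c\<in>?S - {..b}. mass (blk_weight c) (blk_supp c) j) \<le> (\<Sum>c\<in>?S - {..b}. (1/2::real)^c)"
  proof (intro sum_mono mass_block_early)
    fix c assume "c \<in> ?S - {..b}"
    hence "Suc b \<le> c" by auto
    hence "horizon (Suc b) \<le> horizon c" by (rule horizon_mono)
    thus "j \<le> horizon c" using j2 by simp
  qed
  also have "\<dots> \<le> (\<Sum>c\<in>{c. c < K \<and> Suc b \<le> c}. (1/2::real)^c)" by (intro sum_mono2) auto
  also have "\<dots> \<le> 2 * (1/2)^(Suc b)" by (rule half_power_tail_le)
  also have "\<dots> = (1/2)^b" by simp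
  finally have B: "(\<Sum>c\<in>?S - {..b}. mass (blk_weight c) (blk_supp c) j) \<le> (1/2)^b" .
  show ?thesis using split A B by simp
qed

definition quiet_times :: "nat set" where
  "quiet_times = {j. \<exists>b. horizon b < j \<and> j \<le> horizon (Suc b) \<and> j \<in> quiet_window (radius (Suc b)) (blk_thresh b)}"

lemma quiet_times_full: "full_upper_dens quiet_times"
  unfolding full_upper_dens_def
proof (intro allI impI)
  fix \<theta> :: real and M :: nat assume th: "\<theta> > 0"
  define b where "b = max M (nat \<lceil>2 / \<theta>\<rceil>)"
  define N where "N = horizon (Suc b)"
  have Nge: "N \<ge> (b+1) * (horizon b + blk_len b + 1)" unfolding N_def by (rule horizon_Suc_ge)
  have "b + 1 \<le> (b+1) * (horizon b + blk_len b + 1)" using mult_le_mono2[of 1 "horizon b + blk_len b + 1" "b+1"] by simp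
  hence Nb: "N \<ge> b + 1" using Nge by linarith
  have NM: "N \<ge> M" using Nb unfolding b_def by simp
  have Msb: "real (b+1) * real (horizon b) \<le> real N"
  proof -
    have "(b+1) * horizon b \<le> (b+1) * (horizon b + blk_len b + 1)" by (intro mult_le_mono2) simp
    hence "(b+1) * horizon b \<le> N" using Nge by linarith
    hence "real ((b+1) * horizon b) \<le> real N" by (simp only: of_nat_le_iff)
    thus ?thesis by (simp add: algebra_simps)
  qed
  let ?G = "quiet_window (radius (Suc b)) (blk_thresh b)"
  have sub: "?G \<inter> {1..N} \<subseteq> (quiet_times \<inter> {1..N}) \<union> {1..horizon b}"
  proof
    fix x assume x: "x \<in> ?G \<inter> {1..N}"
    show "x \<in> (quiet_times \<inter> {1..N}) \<union> {1..horizon b}"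
    proof (cases "x \<le> horizon b")
      case False
      hence "x \<in> quiet_times" using x unfolding quiet_times_def N_def by (intro CollectI exI[of _ b]) auto
      thus ?thesis using x by auto
    qed (use x in auto)
  qed
  have "card (?G \<inter> {1..N}) \<le> card ((quiet_times \<inter> {1..N}) \<union> {1..horizon b})" by (intro card_mono[OF _ sub]) auto
  also have "\<dots> \<le> card (quiet_times \<inter> {1..N}) + card {1..horizon b}" by (rule card_Un_le)
  finally have c1: "real (card (?G \<inter> {1..N})) \<le> real (card (quiet_times \<inter> {1..N})) + real (horizon b)" by simp
  have c2: "real (card (?G \<inter> {1..N})) \<ge> (1 - 1/(real b + 1)) * real N" using horizon_count[of b] unfolding N_def .
  have bth: "real b + 1 \<ge> 2 / \<theta>" unfolding b_def by linarith
  have "2 / (real b + 1) \<le> \<theta>" using bth th by (simp add: divide_simps mult.commute)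
  hence "(1 - \<theta>) * real N \<le> (1 - 2/(real b + 1)) * real N" by (intro mult_right_mono) auto
  also have "\<dots> = (1 - 1/(real b + 1)) * real N - real N / (real b + 1)" by (simp add: algebra_simps)
  also have "real N / (real b + 1) \<ge> real (horizon b)" using Msb by (simp add: divide_simps algebra_simps)
  hence "(1 - 1/(real b + 1)) * real N - real N / (real b + 1) \<le> real (card (quiet_times \<inter> {1..N}))"
    using c1 c2 by linarith
  finally have "(1 - \<theta>) * real N \<le> real (card (quiet_times \<inter> {1..N}))" .
  moreover have "N > 0" using Nb by simp
  ultimately show "\<exists>N\<ge>M. N > 0 \<and> real (card (quiet_times \<inter> {1..N})) \<ge> (1 - \<theta>) * real N" using NM by blast
qed

lemma sum_perturbed_le:
  assumes fF: "finite F"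
  shows "(\<Sum>m\<in>F. \<bar>a m + union_weight I1 m powr (1/p) - union_weight I2 m powr (1/p)\<bar> powr p * v (m + int j))
     \<le> 3 powr p * ((\<Sum>m\<in>F. \<bar>a m\<bar> powr p * v (m + int j)) + (\<Sum>c\<in>{c. c < abs_bound F \<and> I1 c}. mass (blk_weight c) (blk_supp c) j)
          + (\<Sum>c\<in>{c. c < abs_bound F \<and> I2 c}. mass (blk_weight c) (blk_supp c) j))"
proof -
  have pt: "\<bar>a m + union_weight I1 m powr (1/p) - union_weight I2 m powr (1/p)\<bar> powr p * v (m + int j)
      \<le> 3 powr p * (\<bar>a m\<bar> powr p * v (m + int j) + union_weight I1 m * v (m + int j) + union_weight I2 m * v (m + int j))" for m
  proof -
    have "\<bar>a m + union_weight I1 m powr (1/p) - union_weight I2 m powr (1/p)\<bar> powr p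
        \<le> 3 powr p * (\<bar>a m\<bar> powr p + \<bar>union_weight I1 m powr (1/p)\<bar> powr p + \<bar>union_weight I2 m powr (1/p)\<bar> powr p)"
    proof (intro powr_le_three_terms)
      have w1: "union_weight I1 m powr (1/p) \<ge> 0" and w2: "union_weight I2 m powr (1/p) \<ge> 0" by simp_all
      show "\<bar>a m + union_weight I1 m powr (1/p) - union_weight I2 m powr (1/p)\<bar> \<le> \<bar>a m\<bar> + \<bar>union_weight I1 m powr (1/p)\<bar> + \<bar>union_weight I2 m powr (1/p)\<bar>"
        using abs_ge_self[of "a m"] abs_ge_minus_self[of "a m"] w1 w2 unfolding abs_le_iff by (intro conjI; linarith)
    qed simp
    also have "\<dots> = 3 powr p * (\<bar>a m\<bar> powr p + union_weight I1 m + union_weight I2 m)"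
      using union_weight_nonneg[of I1 m] union_weight_nonneg[of I2 m] p_pos by (simp add: powr_powr)
    finally have h: "\<bar>a m + union_weight I1 m powr (1/p) - union_weight I2 m powr (1/p)\<bar> powr p \<le> 3 powr p * (\<bar>a m\<bar> powr p + union_weight I1 m + union_weight I2 m)" .
    have "\<bar>a m + union_weight I1 m powr (1/p) - union_weight I2 m powr (1/p)\<bar> powr p * v (m + int j) \<le> 3 powr p * (\<bar>a m\<bar> powr p + union_weight I1 m + union_weight I2 m) * v (m + int j)"
      by (rule mult_right_mono[OF h]) (use vpos[of "m + int j"] in simp)
    thus ?thesis by (simp add: algebra_simps)
  qed
  have "(\<Sum>m\<in>F. \<bar>a m + union_weight I1 m powr (1/p) - union_weight I2 m powr (1/p)\<bar> powr p * v (m + int j))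
      \<le> (\<Sum>m\<in>F. 3 powr p * (\<bar>a m\<bar> powr p * v (m + int j) + union_weight I1 m * v (m + int j) + union_weight I2 m * v (m + int j)))"
    by (intro sum_mono pt)
  also have "\<dots> = 3 powr p * ((\<Sum>m\<in>F. \<bar>a m\<bar> powr p * v (m + int j)) + (\<Sum>m\<in>F. union_weight I1 m * v (m + int j)) + (\<Sum>m\<in>F. union_weight I2 m * v (m + int j)))"
    by (simp only: sum_distrib_left[symmetric] sum.distrib)
  also have "\<dots> \<le> 3 powr p * ((\<Sum>m\<in>F. \<bar>a m\<bar> powr p * v (m + int j)) + (\<Sum>c\<in>{c. c < abs_bound F \<and> I1 c}. mass (blk_weight c) (blk_supp c) j)
          + (\<Sum>c\<in>{c. c < abs_bound F \<and> I2 c}. mass (blk_weight c) (blk_supp c) j))"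
    using sum_union_weight_le[OF fF, of "abs_bound F" I1 j] sum_union_weight_le[OF fF, of "abs_bound F" I2 j] abs_bound_ge[OF fF]
    by (intro mult_left_mono add_mono) auto
  finally show ?thesis .
qed

definition selected :: "nat \<Rightarrow> (nat \<Rightarrow> bool) \<Rightarrow> nat \<Rightarrow> bool" where
  "selected q \<sigma> c \<longleftrightarrow> owner c = q \<and> \<sigma> (coord c)"

definition scrambled_point :: "nat \<Rightarrow> (nat \<Rightarrow> bool) \<Rightarrow> int \<Rightarrow> real" where
  "scrambled_point q \<sigma> = (\<lambda>m. enum_seq q m + union_weight (selected q \<sigma>) m powr (1/p))"

text \<open>With \<open>\<sigma> 0\<close> set, every point uses its blocks of digit 0, which separates points of different
  index \<open>q\<close>.\<close>
definition scrambled_set :: "(int \<Rightarrow> real) set" where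
  "scrambled_set = {scrambled_point q \<sigma> | q \<sigma>. \<sigma> 0}"

lemma scrambled_point_eq:
  "scrambled_point q \<sigma> m = enum_seq q m + union_weight (selected q \<sigma>) m powr (1/p) - union_weight (\<lambda>_. False) m powr (1/p)"
  unfolding scrambled_point_def by (simp add: union_weight_empty)

lemma scrambled_point_diff_eq:
  "scrambled_point q \<sigma> m - scrambled_point q' \<sigma>' m = (enum_seq q m - enum_seq q' m) + union_weight (selected q \<sigma>) m powr (1/p) - union_weight (selected q' \<sigma>') m powr (1/p)"
  unfolding scrambled_point_def by simp

lemma enum_seq_diff_support:
  "enum_seq q m - enum_seq q' m \<noteq> 0 \<Longrightarrow> nat \<bar>m\<bar> \<le> enum_radius (max q q')"
  using enum_seq_support[of q m "max q q'"] enum_seq_support[of q' m "max q q'"] by fastforce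

lemma scrambled_point_in_lpw: "scrambled_point q \<sigma> \<in> lpw p v"
proof -
  let ?D = "(\<Sum>m\<in>{- int (enum_radius q)..int (enum_radius q)}. \<bar>enum_seq q m\<bar> powr p * v (m + int 0))"
  have "(\<lambda>m. \<bar>scrambled_point q \<sigma> m\<bar> powr p * v (m + int 0)) summable_on UNIV"
  proof (rule iter_pnorm_le(1))
    fix F :: "int set" assume fF: "finite F"
    have "(\<Sum>m\<in>F. \<bar>scrambled_point q \<sigma> m\<bar> powr p * v (m + int 0))
       \<le> 3 powr p * ((\<Sum>m\<in>F. \<bar>enum_seq q m\<bar> powr p * v (m + int 0)) + (\<Sum>c\<in>{c. c < abs_bound F \<and> selected q \<sigma> c}. mass (blk_weight c) (blk_supp c) 0)
          + (\<Sum>c\<in>{c. c < abs_bound F \<and> False}. mass (blk_weight c) (blk_supp c) 0))"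
      unfolding scrambled_point_eq by (rule sum_perturbed_le[OF fF])
    also have "\<dots> \<le> 3 powr p * (?D + 2 * C ^ 0 + 2 * C ^ 0)"
      using sum_le_support_sum[of "enum_seq q" "enum_radius q" F 0] enum_seq_support[of q _ q] fF sum_mass_blocks_le_power[where K="abs_bound F" and I="selected q \<sigma>" and j=0]
        sum_mass_blocks_le_power[where K="abs_bound F" and I="\<lambda>_. False" and j=0]
      by (intro mult_left_mono add_mono) auto
    finally show "(\<Sum>m\<in>F. \<bar>scrambled_point q \<sigma> m\<bar> powr p * v (m + int 0)) \<le> 3 powr p * (?D + 2 * C ^ 0 + 2 * C ^ 0)" .
  qed
  thus ?thesis unfolding lpw_def by simp
qed

lemma scrambled_point_diff_summable:
  "(\<lambda>m. \<bar>scrambled_point q \<sigma> m - scrambled_point q' \<sigma>' m\<bar> powr p * v (m + int j)) summable_on UNIV"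
proof (rule iter_pnorm_le(1))
  let ?K = "enum_radius (max q q')"
  let ?D = "(\<Sum>m\<in>{- int ?K..int ?K}. \<bar>enum_seq q m - enum_seq q' m\<bar> powr p * v (m + int j))"
  fix F :: "int set" assume fF: "finite F"
  have "(\<Sum>m\<in>F. \<bar>scrambled_point q \<sigma> m - scrambled_point q' \<sigma>' m\<bar> powr p * v (m + int j))
       \<le> 3 powr p * ((\<Sum>m\<in>F. \<bar>enum_seq q m - enum_seq q' m\<bar> powr p * v (m + int j)) + (\<Sum>c\<in>{c. c < abs_bound F \<and> selected q \<sigma> c}. mass (blk_weight c) (blk_supp c) j)
          + (\<Sum>c\<in>{c. c < abs_bound F \<and> selected q' \<sigma>' c}. mass (blk_weight c) (blk_supp c) j))"
    unfolding scrambled_point_diff_eq by (rule sum_perturbed_le[OF fF])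
  also have "\<dots> \<le> 3 powr p * (?D + 2 * C ^ j + 2 * C ^ j)"
    using sum_le_support_sum[of "\<lambda>m. enum_seq q m - enum_seq q' m" ?K F j] enum_seq_diff_support fF sum_mass_blocks_le_power[where K="abs_bound F" and I="selected q \<sigma>" and j=j]
      sum_mass_blocks_le_power[where K="abs_bound F" and I="selected q' \<sigma>'" and j=j]
    by (intro mult_left_mono add_mono) auto
  finally show "(\<Sum>m\<in>F. \<bar>scrambled_point q \<sigma> m - scrambled_point q' \<sigma>' m\<bar> powr p * v (m + int j)) \<le> 3 powr p * (?D + 2 * C ^ j + 2 * C ^ j)" .
qed

lemma null_lower_dens_if_blocks:
  assumes summ: "\<And>j. (\<lambda>m. \<bar>x m\<bar> powr p * v (m + int j)) summable_on UNIV"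
    and inf: "\<And>B. \<exists>b\<ge>B. \<forall>m\<in>blk_supp b. \<bar>x m\<bar> powr p = blk_weight b m"
  shows "null_lower_dens {j. iter_pnorm x j < 1}"
  unfolding null_lower_dens_def
proof (intro allI impI)
  fix \<theta> :: real and M :: nat assume th: "\<theta> > 0"
  obtain b where b: "b \<ge> max M (nat \<lceil>1/\<theta>\<rceil>)" "\<forall>m\<in>blk_supp b. \<bar>x m\<bar> powr p = blk_weight b m" using inf by blast
  define N where "N = blk_len b"
  define Bs where "Bs = {j. 1 \<le> mass (blk_weight b) (blk_supp b) j}"
  have disj: "{j. iter_pnorm x j < 1} \<inter> Bs = {}"
  proof -
    { fix j assume j: "j \<in> Bs"
      have "mass (blk_weight b) (blk_supp b) j = (\<Sum>m\<in>blk_supp b. \<bar>x m\<bar> powr p * v (m + int j))"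
        unfolding mass_def using b(2) by simp
      also have "\<dots> \<le> iter_pnorm x j" by (rule sum_le_iter_pnorm[OF summ blk_supp_finite])
      finally have "iter_pnorm x j \<ge> 1" using j unfolding Bs_def by simp }
    thus ?thesis by fastforce
  qed
  have c1: "card ({j. iter_pnorm x j < 1} \<inter> {1..N}) + card (Bs \<inter> {1..N}) \<le> N" by (rule card_Int_upto_disjoint[OF disj])
  have "Bs \<inter> {1..N} = {j\<in>{1..N}. mass (blk_weight b) (blk_supp b) j \<ge> 1}" unfolding Bs_def by auto
  hence c2: "real (card (Bs \<inter> {1..N})) \<ge> (1 - 1/(real b + 1)) * real N" using blk_len_count[of b] unfolding N_def by simp
  have bth: "real b + 1 \<ge> 1/\<theta>" using b(1) by linarith
  have "1/(real b + 1) \<le> \<theta>" using bth th by (simp add: divide_simps mult.commute)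
  hence "1/(real b + 1) * real N \<le> \<theta> * real N" by (rule mult_right_mono) simp
  hence "real N / (real b + 1) \<le> \<theta> * real N" by simp
  moreover have "real (card ({j. iter_pnorm x j < 1} \<inter> {1..N})) \<le> real N / (real b + 1)"
    using c1 c2 by (simp add: algebra_simps)
  moreover have "N \<ge> M" "N > 0" using blk_len_ge[of b] b(1) unfolding N_def by auto
  ultimately show "\<exists>N\<ge>M. N > 0 \<and> real (card ({j. iter_pnorm x j < 1} \<inter> {1..N})) \<le> \<theta> * real N" by force
qed

lemma scrambled_point_diff_on_blk_supp:
  assumes "selected q \<sigma> b \<noteq> selected q' \<sigma>' b" "q \<le> b" "q' \<le> b" "m \<in> blk_supp b"
  shows "\<bar>scrambled_point q \<sigma> m - scrambled_point q' \<sigma>' m\<bar> powr p = blk_weight b m"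
proof -
  have y: "enum_seq q m = 0" "enum_seq q' m = 0" using enum_seq_on_blk_supp assms by auto
  have A: "blk_weight b m \<ge> 0" by (rule blk_weight_nonneg)
  show ?thesis
  proof (cases "selected q \<sigma> b")
    case True
    hence "scrambled_point q \<sigma> m - scrambled_point q' \<sigma>' m = blk_weight b m powr (1/p)"
      unfolding scrambled_point_diff_eq using y union_weight_on_blk_supp[OF assms(4)] assms(1) by simp
    thus ?thesis using A p_pos by (simp add: powr_powr)
  next
    case False
    hence "scrambled_point q \<sigma> m - scrambled_point q' \<sigma>' m = - (blk_weight b m powr (1/p))"
      unfolding scrambled_point_diff_eq using y union_weight_on_blk_supp[OF assms(4)] assms(1) by simp
    thus ?thesis using A p_pos by (simp add: powr_powr)
  qed
qed

lemma scrambled_points_null_lower_dens: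
  assumes "\<sigma> 0" "\<sigma>' 0" "(q, \<sigma>) \<noteq> (q', \<sigma>')"
  shows "null_lower_dens {j. iter_pnorm (\<lambda>m. scrambled_point q \<sigma> m - scrambled_point q' \<sigma>' m) j < 1}"
proof (rule null_lower_dens_if_blocks[OF scrambled_point_diff_summable])
  fix B
  have "\<exists>b\<ge>B. selected q \<sigma> b \<noteq> selected q' \<sigma>' b \<and> q \<le> b \<and> q' \<le> b"
  proof (cases "q = q'")
    case True
    with assms(3) have "\<sigma> \<noteq> \<sigma>'" by simp
    then obtain k where k: "\<sigma> k \<noteq> \<sigma>' k" by blast
    define b where "b = prod_encode (q, prod_encode (k, B))"
    have "owner b = q" "coord b = k" unfolding b_def by (simp_all add: owner_encode coord_encode)
    moreover have "b \<ge> B" unfolding b_def by (rule encode_ge)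
    moreover have "q \<le> b" using owner_le[of b] \<open>owner b = q\<close> by simp
    ultimately show ?thesis using k True unfolding selected_def by (intro exI[of _ b]) auto
  next
    case False
    define Q where "Q = max q q'"
    define b where "b = prod_encode (Q, prod_encode (0, B))"
    have o: "owner b = Q" "coord b = 0" unfolding b_def by (simp_all add: owner_encode coord_encode)
    moreover have "b \<ge> B" unfolding b_def by (rule encode_ge)
    moreover have "Q \<le> b" using owner_le[of b] o by simp
    moreover have "selected q \<sigma> b \<noteq> selected q' \<sigma>' b" unfolding selected_def o Q_def using False assms(1,2) by auto
    ultimately show ?thesis unfolding Q_def by (intro exI[of _ b]) auto
  qed
  then obtain b where "b \<ge> B" "selected q \<sigma> b \<noteq> selected q' \<sigma>' b" "q \<le> b" "q' \<le> b" by blast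
  thus "\<exists>b\<ge>B. \<forall>m\<in>blk_supp b. \<bar>scrambled_point q \<sigma> m - scrambled_point q' \<sigma>' m\<bar> powr p = blk_weight b m"
    using scrambled_point_diff_on_blk_supp by blast
qed

lemma blk_thresh_le: "blk_thresh b \<le> (1/2)^b"
  unfolding blk_thresh_def using total_weight_nonneg[of "Suc b"] by (simp add: divide_simps)

lemma iter_pnorm_scrambled_diff_quiet:
  obtains Cst where "Cst > 0"
    "\<And>b j. max q q' \<le> b \<Longrightarrow> horizon b < j \<Longrightarrow> j \<le> horizon (Suc b) \<Longrightarrow>
      j \<in> quiet_window (radius (Suc b)) (blk_thresh b) \<Longrightarrow>
      iter_pnorm (\<lambda>m. scrambled_point q \<sigma> m - scrambled_point q' \<sigma>' m) j \<le> Cst * (1/2)^b"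
proof
  let ?K = "enum_radius (max q q')"
  let ?d = "\<lambda>m. enum_seq q m - enum_seq q' m"
  define D where "D = (\<Sum>m\<in>{- int ?K..int ?K}. \<bar>?d m\<bar> powr p)"
  have D0: "D \<ge> 0" unfolding D_def by (intro sum_nonneg) simp
  show "3 powr p * (D + 4) > 0" using D0 by simp
  fix b j assume bq: "max q q' \<le> b" and b: "horizon b < j" "j \<le> horizon (Suc b)"
    "j \<in> quiet_window (radius (Suc b)) (blk_thresh b)"
  have Kb: "?K \<le> radius (Suc b)"
    using enum_radius_mono[OF bq] unfolding radius_Suc by simp
  have dsum: "(\<Sum>m\<in>{- int ?K..int ?K}. \<bar>?d m\<bar> powr p * v (m + int j)) \<le> D * (1/2)^b"
  proof -
    have "(\<Sum>m\<in>{- int ?K..int ?K}. \<bar>?d m\<bar> powr p * v (m + int j)) \<le> (\<Sum>m\<in>{- int ?K..int ?K}. \<bar>?d m\<bar> powr p * (1/2)^b)"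
    proof (intro sum_mono mult_left_mono)
      fix m assume "m \<in> {- int ?K..int ?K}"
      hence "\<bar>m\<bar> \<le> int (radius (Suc b))" using Kb by auto
      hence "v (m + int j) < blk_thresh b" using b(3) unfolding quiet_window_def by blast
      thus "v (m + int j) \<le> (1/2)^b" using blk_thresh_le[of b] by simp
    qed simp
    also have "\<dots> = D * (1/2)^b" unfolding D_def by (simp add: sum_distrib_right)
    finally show ?thesis .
  qed
  have "iter_pnorm (\<lambda>m. scrambled_point q \<sigma> m - scrambled_point q' \<sigma>' m) j \<le> 3 powr p * (D * (1/2)^b + 2 * (1/2)^b + 2 * (1/2)^b)"
  proof (rule iter_pnorm_le(2))
    fix F :: "int set" assume fF: "finite F"
    have "(\<Sum>m\<in>F. \<bar>scrambled_point q \<sigma> m - scrambled_point q' \<sigma>' m\<bar> powr p * v (m + int j))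
     \<le> 3 powr p * ((\<Sum>m\<in>F. \<bar>?d m\<bar> powr p * v (m + int j)) + (\<Sum>c\<in>{c. c < abs_bound F \<and> selected q \<sigma> c}. mass (blk_weight c) (blk_supp c) j)
        + (\<Sum>c\<in>{c. c < abs_bound F \<and> selected q' \<sigma>' c}. mass (blk_weight c) (blk_supp c) j))"
      unfolding scrambled_point_diff_eq by (rule sum_perturbed_le[OF fF])
    also have "\<dots> \<le> 3 powr p * (D * (1/2)^b + 2 * (1/2)^b + 2 * (1/2)^b)"
      using sum_le_support_sum[of ?d ?K F j] enum_seq_diff_support fF dsum
        sum_mass_blocks_stage[OF b, where K="abs_bound F" and I="selected q \<sigma>"]
        sum_mass_blocks_stage[OF b, where K="abs_bound F" and I="selected q' \<sigma>'"]
      by (intro mult_left_mono add_mono) auto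
    finally show "(\<Sum>m\<in>F. \<bar>scrambled_point q \<sigma> m - scrambled_point q' \<sigma>' m\<bar> powr p * v (m + int j)) \<le> 3 powr p * (D * (1/2)^b + 2 * (1/2)^b + 2 * (1/2)^b)" .
  qed
  also have "\<dots> = 3 powr p * (D + 4) * (1/2)^b" by (simp add: algebra_simps)
  finally show "iter_pnorm (\<lambda>m. scrambled_point q \<sigma> m - scrambled_point q' \<sigma>' m) j \<le> 3 powr p * (D + 4) * (1/2)^b" .
qed

lemma scrambled_points_full_upper_dens:
  assumes eta: "\<eta> > 0"
  shows "full_upper_dens {j. iter_pnorm (\<lambda>m. scrambled_point q \<sigma> m - scrambled_point q' \<sigma>' m) j < \<eta>}"
proof -
  obtain Cst where Cpos: "Cst > 0" and bound: "\<And>b j. max q q' \<le> b \<Longrightarrow> horizon b < j \<Longrightarrow>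
      j \<le> horizon (Suc b) \<Longrightarrow> j \<in> quiet_window (radius (Suc b)) (blk_thresh b) \<Longrightarrow>
      iter_pnorm (\<lambda>m. scrambled_point q \<sigma> m - scrambled_point q' \<sigma>' m) j \<le> Cst * (1/2)^b"
    using iter_pnorm_scrambled_diff_quiet by blast
  obtain n where n: "(1/2::real)^n < \<eta> / Cst" using real_arch_pow_inv[of "\<eta> / Cst" "1/2"] eta Cpos by auto
  define b0 where "b0 = max n (max q q')"
  have "(1/2::real)^b0 \<le> (1/2)^n" unfolding b0_def by (intro power_decreasing) auto
  hence "(1/2::real)^b0 < \<eta> / Cst" using n by linarith
  hence b0: "Cst * (1/2)^b0 < \<eta>" using Cpos by (simp add: divide_simps mult.commute)
  have "iter_pnorm (\<lambda>m. scrambled_point q \<sigma> m - scrambled_point q' \<sigma>' m) j < \<eta>" if j: "j \<in> quiet_times" "j \<ge> horizon b0 + 1" for j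
  proof -
    obtain b where b: "horizon b < j" "j \<le> horizon (Suc b)" "j \<in> quiet_window (radius (Suc b)) (blk_thresh b)"
      using j(1) unfolding quiet_times_def by blast
    have "b \<ge> b0"
    proof (rule ccontr)
      assume "\<not> b \<ge> b0"
      hence "horizon (Suc b) \<le> horizon b0" by (intro horizon_mono) simp
      thus False using b(2) j(2) by simp
    qed
    hence "max q q' \<le> b" unfolding b0_def by simp
    hence "iter_pnorm (\<lambda>m. scrambled_point q \<sigma> m - scrambled_point q' \<sigma>' m) j \<le> Cst * (1/2)^b" by (rule bound[OF _ b])
    also have "\<dots> \<le> Cst * (1/2)^b0" using Cpos \<open>b \<ge> b0\<close> by (intro mult_left_mono power_decreasing) auto
    finally show ?thesis using b0 by linarith
  qed
  thus ?thesis
    by (intro full_upper_dens_shift[OF quiet_times_full, of "horizon b0 + 1" 0]) auto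
qed

lemma scrambled_point_inj:
  assumes "\<sigma> 0" "\<sigma>' 0" "scrambled_point q \<sigma> = scrambled_point q' \<sigma>'"
  shows "(q, \<sigma>) = (q', \<sigma>')"
proof (rule ccontr)
  assume ne: "(q, \<sigma>) \<noteq> (q', \<sigma>')"
  have "null_lower_dens {j. iter_pnorm (\<lambda>m. scrambled_point q \<sigma> m - scrambled_point q' \<sigma>' m) j < 1}" by (rule scrambled_points_null_lower_dens[OF assms(1,2) ne])
  moreover have "iter_pnorm (\<lambda>m. scrambled_point q \<sigma> m - scrambled_point q' \<sigma>' m) j = 0" for j
    unfolding iter_pnorm_def using assms(3) by simp
  ultimately have "null_lower_dens UNIV" by simp
  then obtain N where N: "N > 0" "real (card (UNIV \<inter> {1..N})) \<le> 1/2 * real N"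
    unfolding null_lower_dens_def by (metis half_gt_zero zero_less_one)
  thus False by simp
qed

lemma uncountable_scrambled_set: "uncountable scrambled_set"
proof
  assume c: "countable scrambled_set"
  have sub: "(\<lambda>\<sigma>. scrambled_point 0 \<sigma>) ` {\<sigma>. \<sigma> 0} \<subseteq> scrambled_set" unfolding scrambled_set_def by blast
  have "countable ((\<lambda>\<sigma>. scrambled_point 0 \<sigma>) ` {\<sigma>. \<sigma> 0})" using countable_subset[OF sub c] .
  moreover have "inj_on (\<lambda>\<sigma>. scrambled_point 0 \<sigma>) {\<sigma>. \<sigma> 0}" using scrambled_point_inj by (auto simp: inj_on_def)
  ultimately have "countable {\<sigma> :: nat \<Rightarrow> bool. \<sigma> 0}" by (rule countable_image_inj_on)
  thus False using uncountable_bool_seqs by simp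
qed

lemma scrambled_set_dense:
  assumes x: "x \<in> lpw p v" and e: "e > 0"
  shows "\<exists>y\<in>scrambled_set. lpw_dist p v x y < e"
proof -
  define \<eta> where "\<eta> = e powr p / (4 * 3 powr p)"
  have eta: "\<eta> > 0" unfolding \<eta>_def using e by simp
  obtain l where l: "\<And>F. finite F \<Longrightarrow> (\<Sum>m\<in>F. \<bar>x m - list_seq l m\<bar> powr p * v m) \<le> \<eta>"
    using list_seq_approx[OF x eta] by blast
  obtain t where t: "(1/2::real)^t < \<eta>/2" using real_arch_pow_inv[of "\<eta>/2" "1/2"] eta by auto
  define q where "q = prod_encode (to_nat l, t)"
  have yq: "enum_seq q = list_seq l" unfolding enum_seq_def enum_list_def q_def by simp
  have qt: "q \<ge> t" unfolding q_def by (rule le_prod_encode_2)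
  define s1 where "s1 = (\<lambda>_::nat. True)"
  have yG: "scrambled_point q s1 \<in> scrambled_set" unfolding scrambled_set_def s1_def by blast
  have form: "x m - scrambled_point q s1 m = (x m - enum_seq q m) + union_weight (\<lambda>_. False) m powr (1/p) - union_weight (selected q s1) m powr (1/p)" for m
    unfolding scrambled_point_def by (simp add: union_weight_empty)
  have "iter_pnorm (\<lambda>m. x m - scrambled_point q s1 m) 0 \<le> 3 powr p * (\<eta> + 0 + 2 * (1/2)^q)"
  proof (rule iter_pnorm_le(2))
    fix F :: "int set" assume fF: "finite F"
    have "(\<Sum>m\<in>F. \<bar>x m - scrambled_point q s1 m\<bar> powr p * v (m + int 0))
       \<le> 3 powr p * ((\<Sum>m\<in>F. \<bar>x m - enum_seq q m\<bar> powr p * v (m + int 0)) + (\<Sum>c\<in>{c. c < abs_bound F \<and> False}. mass (blk_weight c) (blk_supp c) 0)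
          + (\<Sum>c\<in>{c. c < abs_bound F \<and> selected q s1 c}. mass (blk_weight c) (blk_supp c) 0))"
      unfolding form by (rule sum_perturbed_le[OF fF])
    also have "\<dots> \<le> 3 powr p * (\<eta> + 0 + 2 * (1/2)^q)"
    proof (intro mult_left_mono add_mono)
      show "(\<Sum>m\<in>F. \<bar>x m - enum_seq q m\<bar> powr p * v (m + int 0)) \<le> \<eta>" using l[OF fF] yq by simp
      show "(\<Sum>c\<in>{c. c < abs_bound F \<and> False}. mass (blk_weight c) (blk_supp c) 0) \<le> 0" by simp
      show "(\<Sum>c\<in>{c. c < abs_bound F \<and> selected q s1 c}. mass (blk_weight c) (blk_supp c) 0) \<le> 2 * (1/2)^q"
        by (rule sum_mass_blocks_tail) (use owner_le in \<open>auto simp: selected_def\<close>)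
    qed simp
    finally show "(\<Sum>m\<in>F. \<bar>x m - scrambled_point q s1 m\<bar> powr p * v (m + int 0)) \<le> 3 powr p * (\<eta> + 0 + 2 * (1/2)^q)" .
  qed
  also have "\<dots> \<le> 3 powr p * (\<eta> + \<eta>)"
  proof -
    have "(1/2::real)^q \<le> (1/2)^t" using qt by (intro power_decreasing) auto
    hence "\<eta> + 0 + 2 * (1/2::real)^q \<le> \<eta> + \<eta>" using t by linarith
    thus ?thesis by (intro mult_left_mono) auto
  qed
  also have "\<dots> = e powr p / 2" unfolding \<eta>_def by (simp add: divide_simps)
  also have "\<dots> < e powr p" using e by simp
  finally have "iter_pnorm (\<lambda>m. x m - scrambled_point q s1 m) 0 < e powr p" .
  hence "lpw_dist p v x (scrambled_point q s1) < e" unfolding lpw_dist_eq iter_pnorm_root_less_iff[OF e] .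
  thus ?thesis using yG by blast
qed

theorem dense_distr_chaotic_shift: "dense_distr_chaotic (lpw p v) (lpw_dist p v) fwd_shift"
  unfolding dense_distr_chaotic_def dc_scrambled_def
proof (intro exI[of _ scrambled_set] conjI)
  show "scrambled_set \<subseteq> lpw p v" unfolding scrambled_set_def using scrambled_point_in_lpw by blast
  show "uncountable scrambled_set" by (rule uncountable_scrambled_set)
  show "\<forall>x\<in>lpw p v. \<forall>e>0. \<exists>y\<in>scrambled_set. lpw_dist p v x y < e" using scrambled_set_dense by blast
  show "\<exists>\<epsilon>>0. \<forall>\<delta>>0. \<forall>x\<in>scrambled_set. \<forall>y\<in>scrambled_set. x \<noteq> y \<longrightarrow>
        lower_dens {j. lpw_dist p v ((fwd_shift ^^ j) x) ((fwd_shift ^^ j) y) < \<epsilon>} = 0 \<and>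
        upper_dens {j. lpw_dist p v ((fwd_shift ^^ j) x) ((fwd_shift ^^ j) y) < \<delta>} = 1"
  proof (intro exI[of _ 1] conjI allI impI ballI)
    fix \<delta> :: real and x y assume "\<delta> > 0" "x \<in> scrambled_set" "y \<in> scrambled_set" "x \<noteq> y"
    then obtain q \<sigma> q' \<sigma>' where "x = scrambled_point q \<sigma>" "y = scrambled_point q' \<sigma>'" "\<sigma> 0" "\<sigma>' 0" "(q, \<sigma>) \<noteq> (q', \<sigma>')"
      unfolding scrambled_set_def by blast
    then have "null_lower_dens {j. iter_pnorm (\<lambda>m. x m - y m) j < 1 powr p}"
      and "full_upper_dens {j. iter_pnorm (\<lambda>m. x m - y m) j < \<delta> powr p}"
      using scrambled_points_null_lower_dens scrambled_points_full_upper_dens \<open>\<delta> > 0\<close> by simp_all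
    then show "lower_dens {j. lpw_dist p v ((fwd_shift ^^ j) x) ((fwd_shift ^^ j) y) < 1} = 0"
      and "upper_dens {j. lpw_dist p v ((fwd_shift ^^ j) x) ((fwd_shift ^^ j) y) < \<delta>} = 1"
      using scrambled_pair_iff[OF zero_less_one \<open>\<delta> > 0\<close>] by blast+
  qed simp
qed

end

section \<open>Necessity of the criterion, and the main theorem\<close>

lemma dense_distr_chaotic_imp_distr_chaotic:
  "dense_distr_chaotic X d T \<Longrightarrow> distr_chaotic X d T"
  unfolding distr_chaotic_def dense_distr_chaotic_def by blast

context weighted_shift begin

lemma criterion_imp_dense_distr_chaotic:
  assumes growth_on_positive_dens weights_vanish_densely
  shows "dense_distr_chaotic (lpw p v) (lpw_dist p v) fwd_shift"
proof -
  interpret weighted_shift_criterion p v C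
    by (intro weighted_shift_criterion.intro weighted_shift_criterion_axioms.intro weighted_shift_axioms assms)
  show ?thesis by (rule dense_distr_chaotic_shift)
qed

lemma weights_vanish_densely_if_single:
  assumes h: "\<And>\<delta>. \<delta> > 0 \<Longrightarrow> full_upper_dens {j. v (m0 + int j) < \<delta>}"
  shows weights_vanish_densely
  unfolding weights_vanish_densely_def
proof (intro allI impI)
  fix R :: nat and \<delta> :: real assume d: "\<delta> > 0"
  define t where "t = R + nat \<bar>m0\<bar>"
  have Cp: "C ^ (2*t) > 0" using C1 by simp
  have U: "full_upper_dens {j. v (m0 + int j) < \<delta> / C ^ (2*t)}" using d Cp by (intro h) simp
  show "full_upper_dens (quiet_window R \<delta>)"
  proof (rule full_upper_dens_shift[OF U, of 0 t])
    fix j assume j: "j \<in> {j. v (m0 + int j) < \<delta> / C ^ (2*t)}"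
    show "j + t \<in> quiet_window R \<delta>"
      unfolding quiet_window_def
    proof (intro CollectI allI impI)
      fix m :: int assume m: "\<bar>m\<bar> \<le> int R"
      define k where "k = nat (m - m0 + int t)"
      have k: "m + int (j + t) = (m0 + int j) + int k" unfolding k_def t_def using m by auto
      have k2: "k \<le> 2 * t" unfolding k_def t_def using m by auto
      have "v (m + int (j + t)) \<le> C ^ k * v (m0 + int j)" unfolding k by (rule v_shift_le)
      also have "\<dots> \<le> C ^ (2*t) * v (m0 + int j)" using C1 k2 vpos[of "m0 + int j"]
        by (intro mult_right_mono power_increasing) auto
      also have "\<dots> < C ^ (2*t) * (\<delta> / C ^ (2*t))" using j Cp by (intro mult_strict_left_mono) auto
      also have "\<dots> = \<delta>" using Cp C1 by simp
      finally show "v (m + int (j + t)) < \<delta>" .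
    qed
  qed
qed

lemma lpw_diff:
  assumes "x \<in> lpw p v" "y \<in> lpw p v"
  shows "(\<lambda>m. x m - y m) \<in> lpw p v"
proof -
  have sx: "(\<lambda>n. \<bar>x n\<bar> powr p * v n) summable_on UNIV" and sy: "(\<lambda>n. \<bar>y n\<bar> powr p * v n) summable_on UNIV"
    using assms unfolding lpw_def by auto
  have "(\<lambda>n. 3 powr p * (\<bar>x n\<bar> powr p * v n + \<bar>y n\<bar> powr p * v n)) summable_on UNIV"
    by (intro summable_on_cmult_right summable_on_add sx sy)
  hence "(\<lambda>n. \<bar>x n - y n\<bar> powr p * v n) summable_on UNIV"
  proof (rule summable_on_comparison_test)
    fix n
    have "\<bar>x n - y n\<bar> powr p \<le> 3 powr p * (\<bar>x n\<bar> powr p + \<bar>y n\<bar> powr p + \<bar>0::real\<bar> powr p)"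
      by (intro powr_le_three_terms) auto
    hence "\<bar>x n - y n\<bar> powr p * v n \<le> 3 powr p * (\<bar>x n\<bar> powr p + \<bar>y n\<bar> powr p) * v n"
      using vpos[of n] by (intro mult_right_mono) auto
    thus "\<bar>x n - y n\<bar> powr p * v n \<le> 3 powr p * (\<bar>x n\<bar> powr p * v n + \<bar>y n\<bar> powr p * v n)"
      by (simp add: algebra_simps)
    show "0 \<le> \<bar>x n - y n\<bar> powr p * v n" using vpos[of n] by (simp add: less_imp_le)
  qed
  thus ?thesis unfolding lpw_def by simp
qed

text \<open>The difference of two points of a distributionally scrambled set.\<close>
definition distr_semi_irregular :: "(int \<Rightarrow> real) \<Rightarrow> bool" where
  "distr_semi_irregular z \<longleftrightarrow> z \<in> lpw p v \<and> (\<exists>m. z m \<noteq> 0) \<and>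
     (\<exists>\<epsilon>>0. null_lower_dens {j. iter_pnorm z j < \<epsilon>}) \<and> (\<forall>\<delta>>0. full_upper_dens {j. iter_pnorm z j < \<delta>})"

lemma distr_chaotic_imp_semi_irregular:
  assumes "distr_chaotic (lpw p v) (lpw_dist p v) fwd_shift"
  obtains z where "distr_semi_irregular z"
proof -
  obtain \<Gamma> where "dc_scrambled (lpw p v) (lpw_dist p v) fwd_shift \<Gamma>"
    using assms unfolding distr_chaotic_def by blast
  then obtain \<epsilon> where \<Gamma>: "\<Gamma> \<subseteq> lpw p v" "uncountable \<Gamma>" "\<epsilon> > 0" and scrambled:
    "\<forall>\<delta>>0. \<forall>x\<in>\<Gamma>. \<forall>y\<in>\<Gamma>. x \<noteq> y \<longrightarrow>
       lower_dens {j. lpw_dist p v ((fwd_shift ^^ j) x) ((fwd_shift ^^ j) y) < \<epsilon>} = 0 \<and>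
       upper_dens {j. lpw_dist p v ((fwd_shift ^^ j) x) ((fwd_shift ^^ j) y) < \<delta>} = 1"
    unfolding dc_scrambled_def by (elim conjE exE) (rule that)
  have "infinite \<Gamma>" using \<Gamma>(2) countable_finite by blast
  then obtain x where x: "x \<in> \<Gamma>" using infinite_imp_nonempty by blast
  have "infinite (\<Gamma> - {x})" using \<open>infinite \<Gamma>\<close> by simp
  then obtain y where y: "y \<in> \<Gamma> - {x}" using infinite_imp_nonempty by blast
  have xy: "x \<in> \<Gamma>" "y \<in> \<Gamma>" "x \<noteq> y" using x y by auto
  define z where "z = (\<lambda>m. x m - y m)"
  have pair: "null_lower_dens {j. iter_pnorm z j < \<epsilon> powr p} \<and> full_upper_dens {j. iter_pnorm z j < \<eta> powr p}"
    if "\<eta> > 0" for \<eta>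
    using scrambled[rule_format, OF that xy] unfolding z_def scrambled_pair_iff[OF \<Gamma>(3) that] .
  have "full_upper_dens {j. iter_pnorm z j < \<delta>}" if "\<delta> > 0" for \<delta>
  proof -
    have "\<delta> powr (1/p) > 0" "(\<delta> powr (1/p)) powr p = \<delta>" using that p_pos by (simp_all add: powr_powr)
    thus ?thesis using pair[of "\<delta> powr (1/p)"] by simp
  qed
  moreover have "z \<in> lpw p v" unfolding z_def using \<Gamma>(1) xy by (intro lpw_diff) auto
  moreover have "\<exists>m. z m \<noteq> 0"
  proof (rule ccontr)
    assume "\<not> (\<exists>m. z m \<noteq> 0)"
    hence "x = y" unfolding z_def by (auto intro!: ext)
    with xy(3) show False by simp
  qed
  moreover have "\<epsilon> powr p > 0" using \<Gamma>(3) by simp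
  ultimately have "distr_semi_irregular z"
    unfolding distr_semi_irregular_def using pair[OF zero_less_one] by (intro conjI exI[of _ "\<epsilon> powr p"]) auto
  thus ?thesis by (rule that)
qed

lemma semi_irregular_imp_weights_vanish:
  assumes "distr_semi_irregular z"
  shows weights_vanish_densely
proof -
  obtain m0 where z: "z \<in> lpw p v" "z m0 \<noteq> 0"
    and small: "\<And>\<delta>. \<delta> > 0 \<Longrightarrow> full_upper_dens {j. iter_pnorm z j < \<delta>}"
    using assms unfolding distr_semi_irregular_def by blast
  have zm0: "\<bar>z m0\<bar> powr p > 0" using z(2) by simp
  show ?thesis
  proof (rule weights_vanish_densely_if_single[of m0])
    fix \<delta> :: real assume "\<delta> > 0"
    have "{j. iter_pnorm z j < \<bar>z m0\<bar> powr p * \<delta>} \<subseteq> {j. v (m0 + int j) < \<delta>}"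
    proof
      fix j assume "j \<in> {j. iter_pnorm z j < \<bar>z m0\<bar> powr p * \<delta>}"
      moreover have "(\<Sum>m\<in>{m0}. \<bar>z m\<bar> powr p * v (m + int j)) \<le> iter_pnorm z j"
        by (rule sum_le_iter_pnorm[OF lpw_iter_summable[OF z(1)]]) simp
      ultimately have "\<bar>z m0\<bar> powr p * v (m0 + int j) < \<bar>z m0\<bar> powr p * \<delta>" by simp
      thus "j \<in> {j. v (m0 + int j) < \<delta>}" using zm0 by simp
    qed
    then show "full_upper_dens {j. v (m0 + int j) < \<delta>}"
      using small[of "\<bar>z m0\<bar> powr p * \<delta>"] zm0 \<open>\<delta> > 0\<close> full_upper_dens_mono by simp
  qed
qed

lemma finite_support_captures:
  assumes x: "x \<in> lpw p v" and G: "finite G" and big: "\<And>j. j \<in> G \<Longrightarrow> iter_pnorm x j \<ge> e"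
  obtains F where "finite F" "\<And>j. j \<in> G \<Longrightarrow> e/2 \<le> (\<Sum>m\<in>F. \<bar>x m\<bar> powr p * v (m + int j))"
proof (cases "e > 0")
  case True
  have "\<forall>j\<in>G. \<exists>F. finite F \<and> e/2 \<le> (\<Sum>m\<in>F. \<bar>x m\<bar> powr p * v (m + int j))"
  proof
    fix j assume "j \<in> G"
    obtain F where "finite F" "(\<Sum>m\<in>F. \<bar>x m\<bar> powr p * v (m + int j)) > iter_pnorm x j - e/2"
      using finite_sum_approx_infsum[OF lpw_iter_summable[OF x, of j] pnorm_term_nonneg[of x _ j], of "e/2"] True
      unfolding iter_pnorm_def by auto
    thus "\<exists>F. finite F \<and> e/2 \<le> (\<Sum>m\<in>F. \<bar>x m\<bar> powr p * v (m + int j))"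
      using big[OF \<open>j \<in> G\<close>] by (intro exI[of _ F]) auto
  qed
  then obtain Fj where Fj: "\<forall>j\<in>G. finite (Fj j) \<and> e/2 \<le> (\<Sum>m\<in>Fj j. \<bar>x m\<bar> powr p * v (m + int j))"
    by (rule bchoice[THEN exE])
  show ?thesis
  proof (rule that[of "\<Union>(Fj ` G)"])
    show "finite (\<Union>(Fj ` G))" using G Fj by blast
    fix j assume "j \<in> G"
    hence "e/2 \<le> (\<Sum>m\<in>Fj j. \<bar>x m\<bar> powr p * v (m + int j))" using Fj by blast
    also have "\<dots> \<le> (\<Sum>m\<in>\<Union>(Fj ` G). \<bar>x m\<bar> powr p * v (m + int j))"
      using G Fj \<open>j \<in> G\<close> by (intro sum_mono2 pnorm_term_nonneg) auto
    finally show "e/2 \<le> (\<Sum>m\<in>\<Union>(Fj ` G). \<bar>x m\<bar> powr p * v (m + int j))" .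
  qed
next
  case False
  then show ?thesis using that[of "{}"] by simp
qed

text \<open>Start at a time \<open>j0\<close> where the orbit of \<open>z\<close> is tiny; rescaled, a finite part of \<open>F^j0 z\<close> is a
  unit block whose orbit is large at every later time where the orbit of \<open>z\<close> is not small.\<close>
lemma semi_irregular_imp_growth:
  assumes "distr_semi_irregular z"
  shows growth_on_positive_dens
proof -
  obtain e0 where z: "z \<in> lpw p v" and e0: "e0 > 0"
    and rare: "null_lower_dens {j. iter_pnorm z j < e0}"
    and small: "\<And>\<delta>. \<delta> > 0 \<Longrightarrow> full_upper_dens {j. iter_pnorm z j < \<delta>}"
    using assms unfolding distr_semi_irregular_def by blast
  have "\<exists>a Z N. N \<ge> M \<and> large_often K (1/4) a Z N" for K M
  proof -
    define k1 where "k1 = max K 1"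
    define \<delta> where "\<delta> = e0 / (2 * k1)"
    have k1: "k1 > 0" "K \<le> k1" and dpos: "\<delta> > 0" unfolding k1_def \<delta>_def using e0 by auto
    obtain j0 where j0: "iter_pnorm z j0 < \<delta>" using full_upper_dens_nonempty[OF small[OF dpos]] by blast
    obtain N where N: "N \<ge> M" "N \<ge> 1" and cG: "real (card {i\<in>{1..N}. j0 + i \<notin> {j. iter_pnorm z j < e0}}) \<ge> 1/4 * real N"
      using null_lower_dens_compl_shift[OF rare] by blast
    define G where "G = {i\<in>{1..N}. iter_pnorm z (j0 + i) \<ge> e0}"
    have "finite ((+) j0 ` G)" unfolding G_def by simp
    moreover have "iter_pnorm z j \<ge> e0" if "j \<in> (+) j0 ` G" for j using that unfolding G_def by auto
    ultimately obtain F where F: "finite F"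
        "\<And>j. j \<in> (+) j0 ` G \<Longrightarrow> e0/2 \<le> (\<Sum>m\<in>F. \<bar>z m\<bar> powr p * v (m + int j))"
      using finite_support_captures[OF z] by blast
    define b where "b m = \<bar>z m\<bar> powr p" for m
    define a where "a = (\<lambda>m. (1/\<delta>) * b (m - int j0))"
    define Z where "Z = (+) (int j0) ` F"
    have mass_a: "mass a Z i = (1/\<delta>) * mass b F (j0 + i)" for i unfolding a_def Z_def by (rule mass_translate)
    have "mass b F j0 \<le> iter_pnorm z j0"
      unfolding mass_def b_def by (rule sum_le_iter_pnorm[OF lpw_iter_summable[OF z] F(1)])
    have "mass a Z 0 = mass b F j0 / \<delta>" using mass_a[of 0] by simp
    also have "\<dots> < 1" using \<open>mass b F j0 \<le> iter_pnorm z j0\<close> j0 dpos by simp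
    finally have "mass a Z 0 \<le> 1" by simp
    moreover have "G \<subseteq> {i\<in>{1..N}. mass a Z i \<ge> K}"
    proof
      fix i assume "i \<in> G"
      hence "e0/2 \<le> mass b F (j0 + i)" using F(2)[of "j0 + i"] unfolding mass_def b_def by simp
      have "k1 = (e0/2) / \<delta>" unfolding \<delta>_def using e0 k1 by (simp add: field_simps)
      also have "\<dots> \<le> mass b F (j0 + i) / \<delta>"
        using \<open>e0/2 \<le> mass b F (j0 + i)\<close> dpos by (intro divide_right_mono) auto
      also have "\<dots> = mass a Z i" using mass_a[of i] by simp
      finally have "k1 \<le> mass a Z i" .
      thus "i \<in> {i\<in>{1..N}. mass a Z i \<ge> K}" using \<open>i \<in> G\<close> k1 unfolding G_def by simp
    qed
    hence "real (card G) \<le> real (card {i\<in>{1..N}. mass a Z i \<ge> K})" by (intro of_nat_mono card_mono) auto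
    moreover have "G = {i\<in>{1..N}. j0 + i \<notin> {j. iter_pnorm z j < e0}}" unfolding G_def by auto
    ultimately have "real (card {i\<in>{1..N}. mass a Z i \<ge> K}) \<ge> 1/4 * real N" using cG by simp
    moreover have "finite Z" "\<forall>m. a m \<ge> 0" unfolding Z_def a_def b_def using F(1) dpos by auto
    ultimately have "large_often K (1/4) a Z N" unfolding large_often_def using N(2) \<open>mass a Z 0 \<le> 1\<close> by simp
    thus ?thesis using N(1) by blast
  qed
  thus ?thesis unfolding growth_on_positive_dens_def by (intro exI[of _ "1/4"]) auto
qed

lemma distr_chaotic_imp_criterion:
  assumes "distr_chaotic (lpw p v) (lpw_dist p v) fwd_shift"
  shows "growth_on_positive_dens \<and> weights_vanish_densely"
  using distr_chaotic_imp_semi_irregular[OF assms] semi_irregular_imp_growth semi_irregular_imp_weights_vanish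
  by blast

lemma dens_vanishing_imp_weights_vanish:
  assumes "\<exists>A. upper_dens A = 1 \<and> ((\<lambda>n. v (int n)) \<longlongrightarrow> 0) (inf sequentially (principal A))"
  shows weights_vanish_densely
proof (rule weights_vanish_densely_if_single[of 0])
  obtain A where A: "upper_dens A = 1" and lim: "((\<lambda>n. v (int n)) \<longlongrightarrow> 0) (inf sequentially (principal A))"
    using assms by blast
  fix \<delta> :: real assume "\<delta> > 0"
  then obtain n0 where n0: "\<And>n. n \<ge> n0 \<Longrightarrow> n \<in> A \<Longrightarrow> v (int n) < \<delta>"
    using order_tendstoD(2)[OF lim] unfolding eventually_inf_principal eventually_sequentially by blast
  show "full_upper_dens {j. v (0 + int j) < \<delta>}"
    by (rule full_upper_dens_shift[of A n0 0]) (use A upper_dens_eq_1_iff n0 in auto)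
qed

lemma sum_ratio_large_imp_growth:
  fixes S :: "nat \<Rightarrow> int set" and N :: "nat \<Rightarrow> nat"
  assumes S: "\<forall>k\<ge>1. finite (S k) \<and> S k \<noteq> {}" and eps: "\<epsilon> > 0" and N: "strict_mono N"
    and large: "\<forall>k\<ge>1. real (card {n \<in> {1..N k}. (\<Sum>j\<in>S k. v (int n + j)) / (\<Sum>j\<in>S k. v j) \<ge> real k})
                 \<ge> real (N k) * \<epsilon>"
  shows growth_on_positive_dens
  unfolding growth_on_positive_dens_def
proof (intro exI[of _ \<epsilon>] conjI allI)
  fix K :: real and M :: nat
  define k where "k = max (nat \<lceil>K\<rceil>) (max M 1)"
  have k: "k \<ge> 1" "k \<ge> M" "real k \<ge> K" unfolding k_def by linarith+
  have SF: "finite (S k)" "S k \<noteq> {}" using S k by auto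
  define sv where "sv = (\<Sum>j\<in>S k. v j)"
  have svp: "sv > 0" unfolding sv_def using SF vpos by (intro sum_pos) auto
  have mass_S: "mass (\<lambda>_. 1 / sv) (S k) n = (\<Sum>j\<in>S k. v (int n + j)) / sv" for n
    unfolding mass_def by (simp add: sum_divide_distrib add.commute)
  have Nk: "N k \<ge> k" using strict_mono_imp_increasing[OF N] by simp
  have "real (card {n \<in> {1..N k}. (\<Sum>j\<in>S k. v (int n + j)) / sv \<ge> real k})
      \<le> real (card {j\<in>{1..N k}. mass (\<lambda>_. 1 / sv) (S k) j \<ge> K})"
    by (intro of_nat_mono card_upto_mono) (use mass_S k in auto)
  moreover have "real (card {n \<in> {1..N k}. (\<Sum>j\<in>S k. v (int n + j)) / sv \<ge> real k}) \<ge> \<epsilon> * real (N k)"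
    using large k unfolding sv_def by (simp add: mult.commute)
  moreover have "mass (\<lambda>_. 1 / sv) (S k) 0 \<le> 1" using mass_S[of 0] svp unfolding sv_def by simp
  ultimately have "large_often K \<epsilon> (\<lambda>_. 1 / sv) (S k) (N k)"
    using SF(1) svp Nk k(1) unfolding large_often_def by auto
  thus "\<exists>a Z N'. N' \<ge> M \<and> large_often K \<epsilon> a Z N'"
    using Nk k by (intro exI[of _ "\<lambda>_. 1 / sv"] exI[of _ "S k"] exI[of _ "N k"]) auto
qed (rule eps)

lemma distr_chaotic_iff_dense:
  "distr_chaotic (lpw p v) (lpw_dist p v) fwd_shift \<longleftrightarrow> dense_distr_chaotic (lpw p v) (lpw_dist p v) fwd_shift"
  using distr_chaotic_imp_criterion criterion_imp_dense_distr_chaotic dense_distr_chaotic_imp_distr_chaotic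
  by blast

lemma hypotheses_imp_chaotic:
  fixes S :: "nat \<Rightarrow> int set"
  assumes "(\<forall>k\<ge>1. finite (S k) \<and> S k \<noteq> {}) \<and>
           (\<exists>A :: nat set. upper_dens A = 1 \<and>
               ((\<lambda>n. v (int n)) \<longlongrightarrow> 0) (inf sequentially (principal A))) \<and>
           (\<exists>\<epsilon>>0. \<exists>N :: nat \<Rightarrow> nat. strict_mono N \<and>
               (\<forall>k\<ge>1. real (card {n \<in> {1..N k}.
                   (\<Sum>j\<in>S k. v (int n + j)) / (\<Sum>j\<in>S k. v j) \<ge> real k})
                 \<ge> real (N k) * \<epsilon>))"
  shows "distr_chaotic (lpw p v) (lpw_dist p v) fwd_shift \<and> dense_distr_chaotic (lpw p v) (lpw_dist p v) fwd_shift"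
proof -
  have weights_vanish_densely using assms by (intro dens_vanishing_imp_weights_vanish) blast
  moreover have growth_on_positive_dens
    using assms by (elim conjE exE) (rule sum_ratio_large_imp_growth)
  ultimately show ?thesis using criterion_imp_dense_distr_chaotic dense_distr_chaotic_imp_distr_chaotic by blast
qed

end

theorem mainTheorem14:
  fixes p :: real and v :: "int \<Rightarrow> real"
  assumes p: "1 \<le> p"
    and vpos: "\<And>n. v n > 0"
    and vbdd: "bdd_above (range (\<lambda>n. v (n + 1) / v n))"
  shows "(distr_chaotic (lpw p v) (lpw_dist p v) fwd_shift \<longleftrightarrow>
          dense_distr_chaotic (lpw p v) (lpw_dist p v) fwd_shift)
       \<and> (\<forall>S :: nat \<Rightarrow> int set.
           (\<forall>k\<ge>1. finite (S k) \<and> S k \<noteq> {}) \<and>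
           (\<exists>A :: nat set. upper_dens A = 1 \<and>
               ((\<lambda>n. v (int n)) \<longlongrightarrow> 0) (inf sequentially (principal A))) \<and>
           (\<exists>\<epsilon>>0. \<exists>N :: nat \<Rightarrow> nat. strict_mono N \<and>
               (\<forall>k\<ge>1. real (card {n \<in> {1..N k}.
                   (\<Sum>j\<in>S k. v (int n + j)) / (\<Sum>j\<in>S k. v j) \<ge> real k})
                 \<ge> real (N k) * \<epsilon>))
           \<longrightarrow> distr_chaotic (lpw p v) (lpw_dist p v) fwd_shift
             \<and> dense_distr_chaotic (lpw p v) (lpw_dist p v) fwd_shift)"
proof -
  obtain C where "weighted_shift p v C" using weighted_shift_if_bounded_ratio[OF p vpos vbdd] .
  then interpret weighted_shift p v C .
  show ?thesis
  proof (rule conjI)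
    show "distr_chaotic (lpw p v) (lpw_dist p v) fwd_shift \<longleftrightarrow>
          dense_distr_chaotic (lpw p v) (lpw_dist p v) fwd_shift"
      by (rule distr_chaotic_iff_dense)
  qed (intro allI impI hypotheses_imp_chaotic)
qed

end
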